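(* Let $a\ge1$ and $d\ge1$ be integers, and put $w=(a,d)$, $\alpha=a/w$, $\delta=d/w$. Then $$\rho(a,d)=\frac{1}{\varphi(\delta)\,w\,\varphi(w)}\prod_{\substack{p\mid\delta\\ p\nmid w}}\Bigl(1-\frac{1}{p(p-1)}\Bigr)\prod_{\substack{p\mid\delta\\ p\mid w}}\Bigl(1-\frac1{p^2}\Bigr)\sum_{\chi \bmod \delta}\overline{\chi(\alpha)}\,A_\chi\prod_{\substack{p\mid w\\ p\nmid\delta}}\frac{1+\frac{\chi(p)-1}{p^2-\chi(p)}}{1+\frac{(\chi(p)-1)p}{(p^2-\chi(p))(p-1)}},$$ where $\chi$ runs over the Dirichlet characters modulo $\delta$. In particular, if $(a,d)=1$, then $$\rho(a,d)=\frac{1}{\varphi(d)}\prod_{p\mid d}\Bigl(1-\frac1{p(p-1)}\Bigr)\sum_{\chi\bmod d}\overline{\chi(a)}\,A_\chi.$$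
   Context: $p$ always denotes a prime, $\varphi$ Euler's totient. For integers $a$ and $d\ge1$, $\rho(a,d)=A\sum_{t\ge1,\ t\equiv a\pmod d}r(t)$, where $A=\prod_p\bigl(1-\frac{1}{p(p-1)}\bigr)$ and $r(t)=\frac{1}{t^2}\prod_{p\mid t}\frac{p^2-1}{p^2-p-1}$. For a Dirichlet character $\chi$, $A_\chi=\prod_{p:\ \chi(p)\neq0}\Bigl(1+\frac{(\chi(p)-1)p}{(p^2-\chi(p))(p-1)}\Bigr)$. *)

theory Defs
  imports "HOL-Analysis.Analysis" "HOL-Number_Theory.Number_Theory"
begin

text \<open>Dirichlet characters modulo d, viewed as functions on the naturals:
  completely multiplicative, d-periodic, and vanishing exactly on the integers
  not coprime to d.  (These force chi 1 = 1.)\<close>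
definition dirichlet_char :: "nat \<Rightarrow> (nat \<Rightarrow> complex) \<Rightarrow> bool" where
  "dirichlet_char d chi \<longleftrightarrow>
     (\<forall>m n. chi (m * n) = chi m * chi n) \<and>
     (\<forall>n. chi (n + d) = chi n) \<and>
     (\<forall>n. chi n = 0 \<longleftrightarrow> \<not> coprime n d)"

definition A_const :: real where
  "A_const = (\<Prod>p. if prime p then 1 - 1 / (real p * (real p - 1)) else 1)"

definition r_fun :: "nat \<Rightarrow> real" where
  "r_fun t = 1 / (real t)^2 *
     (\<Prod>p\<in>prime_factors t. ((real p)^2 - 1) / ((real p)^2 - real p - 1))"

definition rho :: "nat \<Rightarrow> nat \<Rightarrow> real" where
  "rho a d = A_const * infsum r_fun {t. t \<ge> 1 \<and> [t = a] (mod d)}"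

definition A_chi :: "(nat \<Rightarrow> complex) \<Rightarrow> complex" where
  "A_chi chi = (\<Prod>p. if prime p \<and> chi p \<noteq> 0 then
       1 + ((chi p - 1) * of_nat p) / ((of_nat p ^ 2 - chi p) * (of_nat p - 1))
     else 1)"

end

theory Submission
  imports Defs
begin

text \<open>
  Put \<open>w = gcd a d\<close>, \<open>a = w\<alpha>\<close>, \<open>d = w\<delta>\<close>. The progression \<open>t \<equiv> a (mod d)\<close> consists of the
  multiples \<open>t = wn\<close> with \<open>n \<equiv> \<alpha> (mod \<delta>)\<close>, and \<open>r(wn)\<close> is a constant depending on \<open>w\<close>
  times a multiplicative function \<open>r\<^sub>w(n)/n\<^sup>2\<close>. Orthogonality of the characters modulo \<open>\<delta>\<close>
  turns the sum over the progression into \<open>\<Sum>\<^sub>\<chi> \<chi>(\<alpha>)\<^sup>* L\<^sub>\<chi> / \<phi>(\<delta>)\<close>, where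
  \<open>L\<^sub>\<chi> = \<Sum>\<^sub>n \<chi>(n) r\<^sub>w(n)/n\<^sup>2\<close> converges absolutely and is an Euler product. Multiplied prime by
  prime with the factors \<open>1 - 1/(p(p-1))\<close> of \<open>A\<close>, each Euler factor becomes the corresponding
  factor of \<open>A\<^sub>\<chi>\<close>, except at the finitely many primes dividing \<open>w\<delta>\<close>; these produce the
  finite products of the formula. That the characters separate residues, hence are \<open>\<phi>(\<delta>)\<close>
  in number, follows by extending characters of subgroups of \<open>(\<int>/\<delta>\<int>)\<^sup>*\<close> one generator
  at a time.
\<close>

section \<open>Dirichlet characters\<close>

lemma dirichlet_char_mult: "dirichlet_char d chi \<Longrightarrow> chi (m * n) = chi m * chi n"
  unfolding dirichlet_char_def by blast

lemma dirichlet_char_eq_0_iff: "dirichlet_char d chi \<Longrightarrow> chi n = 0 \<longleftrightarrow> \<not> coprime n d"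
  unfolding dirichlet_char_def by blast

lemma dirichlet_char_eq_0_if_not_coprime:
  "dirichlet_char d chi \<Longrightarrow> \<not> coprime n d \<Longrightarrow> chi n = 0"
  using dirichlet_char_eq_0_iff by blast

lemma dirichlet_char_1:
  assumes "dirichlet_char d chi"
  shows "chi 1 = 1"
proof -
  have "chi 1 = chi 1 * chi 1"
    using dirichlet_char_mult[OF assms, of 1 1] by simp
  moreover have "chi 1 \<noteq> 0"
    using dirichlet_char_eq_0_iff[OF assms, of 1] by simp
  ultimately show ?thesis
    by (metis mult_cancel_left1)
qed

lemma dirichlet_char_add_mult_modulus:
  assumes "dirichlet_char d chi"
  shows "chi (n + k * d) = chi n"
proof (induction k)
  case (Suc k)
  have "chi (n + Suc k * d) = chi ((n + k * d) + d)"
    by (simp add: ac_simps)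
  also have "\<dots> = chi (n + k * d)"
    using assms unfolding dirichlet_char_def by blast
  finally show ?case
    using Suc by simp
qed simp

lemma dirichlet_char_mod:
  assumes "dirichlet_char d chi"
  shows "chi (n mod d) = chi n"
  using dirichlet_char_add_mult_modulus[OF assms, of "n mod d" "n div d"] by simp

lemma dirichlet_char_cong:
  assumes "dirichlet_char d chi" "[m = n] (mod d)"
  shows "chi m = chi n"
  using assms dirichlet_char_mod[OF assms(1)] unfolding cong_def by metis

lemma dirichlet_char_power:
  assumes "dirichlet_char d chi"
  shows "chi (n ^ k) = chi n ^ k"
  by (induction k) (use dirichlet_char_1[OF assms] dirichlet_char_mult[OF assms] in auto)

lemma dirichlet_char_power_totient:
  assumes "dirichlet_char d chi" "coprime n d"
  shows "chi n ^ totient d = 1"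
proof -
  have "chi (n ^ totient d) = chi 1"
    by (rule dirichlet_char_cong[OF assms(1) euler_theorem[OF assms(2)]])
  then show ?thesis
    by (simp only: dirichlet_char_power[OF assms(1)] dirichlet_char_1[OF assms(1)])
qed

lemma norm_dirichlet_char:
  assumes "dirichlet_char d chi" "0 < d" "coprime n d"
  shows "norm (chi n) = 1"
  using power_eq_1_iff[OF dirichlet_char_power_totient[OF assms(1,3)]] assms(2) by simp

lemma norm_dirichlet_char_le:
  assumes "dirichlet_char d chi" "0 < d"
  shows "norm (chi n) \<le> 1"
  using norm_dirichlet_char[OF assms] dirichlet_char_eq_0_if_not_coprime[OF assms(1)]
  by (cases "coprime n d") auto

lemma cnj_dirichlet_char_times_self:
  assumes "dirichlet_char d chi" "0 < d"
  shows "cnj (chi n) * chi n = (if coprime n d then 1 else 0)"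
proof -
  have "cnj (chi n) * chi n = complex_of_real ((norm (chi n))\<^sup>2)"
    by (metis complex_norm_square mult.commute)
  then show ?thesis
    using norm_dirichlet_char[OF assms] dirichlet_char_eq_0_if_not_coprime[OF assms(1)] by auto
qed

lemma dirichlet_char_times:
  "dirichlet_char d c1 \<Longrightarrow> dirichlet_char d c2 \<Longrightarrow> dirichlet_char d (\<lambda>n. c1 n * c2 n)"
  unfolding dirichlet_char_def by (auto simp: mult_ac)

lemma dirichlet_char_cnj: "dirichlet_char d c \<Longrightarrow> dirichlet_char d (\<lambda>n. cnj (c n))"
  unfolding dirichlet_char_def by auto

definition principal_dirichlet_char :: "nat \<Rightarrow> nat \<Rightarrow> complex" where
  "principal_dirichlet_char d n = (if coprime n d then 1 else 0)"

lemma coprime_add_modulus_iff: "coprime (n + d) d \<longleftrightarrow> coprime n (d::nat)"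
  by (metis coprime_iff_gcd_eq_1 gcd_add1)

lemma dirichlet_char_principal: "dirichlet_char d (principal_dirichlet_char d)"
  unfolding dirichlet_char_def principal_dirichlet_char_def by (auto simp: coprime_add_modulus_iff)

lemma finite_dirichlet_chars:
  assumes "0 < d"
  shows "finite {chi. dirichlet_char d chi}"
proof -
  define V where "V = insert 0 {z::complex. z ^ totient d = 1}"
  have "finite V"
    using assms finite_roots_unity[of "totient d"] by (simp add: V_def Suc_le_eq)
  have char_values: "chi n \<in> V" if "dirichlet_char d chi" for chi n
    using dirichlet_char_power_totient[OF that] dirichlet_char_eq_0_iff[OF that]
    unfolding V_def by (cases "coprime n d") auto
  have "inj_on (\<lambda>chi. restrict chi {..<d}) {chi. dirichlet_char d chi}"
  proof (rule inj_onI, rule ext)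
    fix c1 c2 n
    assume c: "c1 \<in> {chi. dirichlet_char d chi}" "c2 \<in> {chi. dirichlet_char d chi}"
      and eq: "restrict c1 {..<d} = restrict c2 {..<d}"
    have "c1 (n mod d) = c2 (n mod d)"
      using assms fun_cong[OF eq, of "n mod d"] by simp
    then show "c1 n = c2 n"
      using c dirichlet_char_mod[of d c1 n] dirichlet_char_mod[of d c2 n] by simp
  qed
  moreover have "(\<lambda>chi. restrict chi {..<d}) ` {chi. dirichlet_char d chi} \<subseteq> PiE {..<d} (\<lambda>_. V)"
    by (intro image_subsetI) (simp add: restrict_PiE_iff char_values)
  ultimately show ?thesis
    using \<open>finite V\<close> by (metis finite_PiE finite_imageD finite_lessThan finite_subset)
qed

section \<open>Characters of subgroups of the unit residues\<close>

definition unit_residues :: "nat \<Rightarrow> nat set" where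
  "unit_residues d = {x. x < d \<and> coprime x d}"

definition residue_subgroup :: "nat \<Rightarrow> nat set \<Rightarrow> bool" where
  "residue_subgroup d H \<longleftrightarrow>
     H \<subseteq> unit_residues d \<and> 1 mod d \<in> H \<and> (\<forall>x\<in>H. \<forall>y\<in>H. x * y mod d \<in> H)"

definition residue_char :: "nat \<Rightarrow> nat set \<Rightarrow> (nat \<Rightarrow> complex) \<Rightarrow> bool" where
  "residue_char d H psi \<longleftrightarrow>
     (\<forall>x\<in>H. psi x \<noteq> 0) \<and> (\<forall>x\<in>H. \<forall>y\<in>H. psi (x * y mod d) = psi x * psi y)"

lemma finite_unit_residues: "finite (unit_residues d)"
  unfolding unit_residues_def by auto

lemma mod_in_unit_residues: "0 < d \<Longrightarrow> coprime x d \<Longrightarrow> x mod d \<in> unit_residues d"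
  by (simp add: unit_residues_def coprime_mod_left_iff)

lemma card_unit_residues:
  assumes "0 < d"
  shows "card (unit_residues d) = totient d"
proof (cases "d = 1")
  case True
  then have "unit_residues d = {0}"
    by (auto simp: unit_residues_def)
  then show ?thesis
    using True by simp
next
  case False
  have "0 < x" if "coprime x d" for x
    using that False by (cases "x = 0") auto
  with False have "unit_residues d = totatives d"
    using assms by (auto simp: unit_residues_def in_totatives_iff dest: totatives_less)
  then show ?thesis
    by (simp add: totient_def)
qed

lemma residue_subgroup_pos: "residue_subgroup d H \<Longrightarrow> 0 < d"
  by (auto simp: residue_subgroup_def unit_residues_def)

lemma residue_subgroup_mem:
  "residue_subgroup d H \<Longrightarrow> x \<in> H \<Longrightarrow> x < d \<and> coprime x d"
  by (auto simp: residue_subgroup_def unit_residues_def)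

lemma residue_subgroup_power:
  assumes "residue_subgroup d H" "x \<in> H"
  shows "x ^ k mod d \<in> H"
proof (induction k)
  case 0
  then show ?case
    using assms(1) by (simp add: residue_subgroup_def)
next
  case (Suc k)
  then have "x * (x ^ k mod d) mod d \<in> H"
    using assms by (simp add: residue_subgroup_def)
  then show ?case
    by (simp add: mod_mult_right_eq)
qed

lemma residue_subgroup_inverse:
  assumes "residue_subgroup d H" "x \<in> H"
  obtains y where "y \<in> H" "[x * y = 1] (mod d)"
proof
  show "x ^ (totient d - 1) mod d \<in> H"
    by (rule residue_subgroup_power[OF assms])
  have "0 < totient d"
    using residue_subgroup_pos[OF assms(1)] by simp
  then have "x * x ^ (totient d - 1) = x ^ totient d"
    by (cases "totient d") simp_all
  then have "[x * (x ^ (totient d - 1) mod d) = x ^ totient d] (mod d)"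
    by (simp add: cong_def mod_mult_right_eq)
  also have "[x ^ totient d = 1] (mod d)"
    using euler_theorem residue_subgroup_mem[OF assms] by blast
  finally show "[x * (x ^ (totient d - 1) mod d) = 1] (mod d)" .
qed

lemma residue_subgroup_cancel:
  assumes H: "residue_subgroup d H" and "a mod d \<in> H" "a * b mod d \<in> H"
  shows "b mod d \<in> H"
proof -
  obtain y where y: "y \<in> H" "[a mod d * y = 1] (mod d)"
    using residue_subgroup_inverse[OF H \<open>a mod d \<in> H\<close>] .
  have "[(a * b mod d) * y = (a mod d * y) * b] (mod d)"
    unfolding cong_def by (metis mod_mult_left_eq mult.assoc mult.commute)
  also have "[(a mod d * y) * b = 1 * b] (mod d)"
    using y(2) by (rule cong_scalar_right)
  finally have "b mod d = (a * b mod d) * y mod d"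
    by (simp add: cong_def)
  then show ?thesis
    using H y(1) \<open>a * b mod d \<in> H\<close> by (simp add: residue_subgroup_def)
qed

lemma residue_char_1:
  assumes "residue_subgroup d H" "residue_char d H psi"
  shows "psi (1 mod d) = 1"
proof -
  have one: "1 mod d \<in> H"
    using assms(1) by (simp add: residue_subgroup_def)
  have "(1 mod d) * (1 mod d) mod d = 1 mod d"
    by (simp only: mod_mult_eq mult_1)
  then have "psi (1 mod d) = psi (1 mod d) * psi (1 mod d)"
    using assms(2) one unfolding residue_char_def by metis
  moreover have "psi (1 mod d) \<noteq> 0"
    using assms(2) one by (simp add: residue_char_def)
  ultimately show ?thesis
    by (metis mult_cancel_left1)
qed

lemma residue_char_power:
  assumes H: "residue_subgroup d H" and psi: "residue_char d H psi" and "x \<in> H"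
  shows "psi (x ^ k mod d) = psi x ^ k"
proof (induction k)
  case 0
  then show ?case
    using residue_char_1[OF H psi] by simp
next
  case (Suc k)
  have "psi (x * (x ^ k mod d) mod d) = psi x * psi (x ^ k mod d)"
    using psi \<open>x \<in> H\<close> residue_subgroup_power[OF H \<open>x \<in> H\<close>] by (simp add: residue_char_def)
  then show ?case
    using Suc by (simp add: mod_mult_right_eq)
qed

lemma least_power_in_residue_subgroup:
  assumes H: "residue_subgroup d H" and x: "x \<in> unit_residues d"
  obtains m where "0 < m" "x ^ m mod d \<in> H" "\<And>k. 0 < k \<Longrightarrow> k < m \<Longrightarrow> x ^ k mod d \<notin> H"
proof -
  let ?P = "\<lambda>k. 0 < k \<and> x ^ k mod d \<in> H"
  have "[x ^ totient d = 1] (mod d)"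
    using x euler_theorem by (simp add: unit_residues_def)
  then have "?P (totient d)"
    using H residue_subgroup_pos[OF H] by (simp add: cong_def residue_subgroup_def)
  then have "?P (LEAST k. ?P k)"
    by (rule LeastI)
  moreover have "\<not> ?P k" if "k < (LEAST k. ?P k)" for k
    using that by (rule not_less_Least)
  ultimately show thesis
    using that by blast
qed

locale residue_char_extension =
  fixes d :: nat and H :: "nat set" and psi :: "nat \<Rightarrow> complex" and x m :: nat and z :: complex
  assumes subgroup: "residue_subgroup d H" and char: "residue_char d H psi"
    and x: "x \<in> unit_residues d"
    and m_pos: "0 < m" and power_m_mem: "x ^ m mod d \<in> H"
    and m_least: "\<And>k. 0 < k \<Longrightarrow> k < m \<Longrightarrow> x ^ k mod d \<notin> H"
    and z: "z ^ m = psi (x ^ m mod d)"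
begin

definition ext_subgroup :: "nat set" where
  "ext_subgroup = {h * x ^ k mod d |h k. h \<in> H}"

definition ext_char :: "nat \<Rightarrow> complex" where
  "ext_char y = (THE c. \<exists>h\<in>H. \<exists>k. y = h * x ^ k mod d \<and> c = psi h * z ^ k)"

lemma x_lt: "x < d" and x_coprime: "coprime x d"
  using x by (auto simp: unit_residues_def)

lemma psi_mult: "h1 \<in> H \<Longrightarrow> h2 \<in> H \<Longrightarrow> psi (h1 * h2 mod d) = psi h1 * psi h2"
  using char by (simp add: residue_char_def)

lemma dvd_if_power_mem:
  assumes "x ^ j mod d \<in> H"
  shows "m dvd j"
proof -
  have "x ^ (m * (j div m)) mod d \<in> H"
    using residue_subgroup_power[OF subgroup power_m_mem, of "j div m"]
    by (simp add: power_mod power_mult)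
  moreover have "x ^ (m * (j div m)) * x ^ (j mod m) mod d \<in> H"
    using assms by (simp flip: power_add)
  ultimately have "x ^ (j mod m) mod d \<in> H"
    by (rule residue_subgroup_cancel[OF subgroup])
  then have "j mod m = 0"
    using m_least[of "j mod m"] m_pos by (meson bot_nat_0.not_eq_extremum mod_less_divisor)
  then show ?thesis
    by (simp add: dvd_eq_mod_eq_0)
qed

text \<open>Two representations \<open>h x\<^sup>k\<close> of the same residue differ by a power of \<open>x\<^sup>m \<in> H\<close>, on which
  \<open>psi\<close> and \<open>z\<^sup>m\<close> agree.\<close>

lemma ext_value_unique_le:
  assumes h: "h1 \<in> H" "h2 \<in> H" and eq: "[h1 * x ^ k1 = h2 * x ^ k2] (mod d)" and "k2 \<le> k1"
  shows "psi h1 * z ^ k1 = psi h2 * z ^ k2"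
proof -
  define j where "j = k1 - k2"
  have k1: "k1 = j + k2"
    using \<open>k2 \<le> k1\<close> by (simp add: j_def)
  have "[h1 * x ^ j * x ^ k2 = h2 * x ^ k2] (mod d)"
    using eq by (simp add: k1 power_add mult.assoc)
  then have hj: "[h1 * x ^ j = h2] (mod d)"
    using cong_mult_rcancel_nat[of "x ^ k2" d] x_coprime by simp
  then have "x ^ j mod d \<in> H"
    using residue_subgroup_cancel[OF subgroup, of h1 "x ^ j"] h residue_subgroup_mem[OF subgroup]
    by (simp add: cong_def)
  then obtain q where j: "j = m * q"
    using dvd_if_power_mem by blast
  have "h2 = h1 * ((x ^ m mod d) ^ q mod d) mod d"
    using hj residue_subgroup_mem[OF subgroup h(2)] unfolding cong_def j
    by (metis mod_less mod_mult_right_eq power_mod power_mult)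
  then have "psi h2 = psi h1 * z ^ j"
    using psi_mult h(1) residue_subgroup_power[OF subgroup power_m_mem]
      residue_char_power[OF subgroup char power_m_mem]
    by (simp add: z j power_mult)
  then show ?thesis
    by (simp add: k1 power_add)
qed

lemma ext_value_unique:
  "h1 \<in> H \<Longrightarrow> h2 \<in> H \<Longrightarrow> h1 * x ^ k1 mod d = h2 * x ^ k2 mod d \<Longrightarrow> psi h1 * z ^ k1 = psi h2 * z ^ k2"
  using ext_value_unique_le[of h1 h2 k1 k2] ext_value_unique_le[of h2 h1 k2 k1]
  unfolding cong_def by (cases "k2 \<le> k1") auto

lemma ext_char_eq: "h \<in> H \<Longrightarrow> ext_char (h * x ^ k mod d) = psi h * z ^ k"
  unfolding ext_char_def using ext_value_unique by (intro the_equality) (blast, metis)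

lemma mult_mod_eq: "(h1 * x ^ k1 mod d) * (h2 * x ^ k2 mod d) mod d =
    (h1 * h2 mod d) * x ^ (k1 + k2) mod d"
  by (metis mod_mult_left_eq mod_mult_right_eq power_add mult.assoc mult.left_commute)

lemma subset_ext_subgroup: "H \<subseteq> ext_subgroup"
proof
  fix h
  assume "h \<in> H"
  then have "h = h * x ^ 0 mod d"
    using residue_subgroup_mem[OF subgroup] by simp
  then show "h \<in> ext_subgroup"
    unfolding ext_subgroup_def using \<open>h \<in> H\<close> by blast
qed

lemma one_mod_mem: "1 mod d \<in> H"
  using subgroup by (simp add: residue_subgroup_def)

lemma x_eq: "x = (1 mod d) * x ^ 1 mod d"
  using x_lt by (simp add: mod_mult_left_eq)

lemma x_mem_ext_subgroup: "x \<in> ext_subgroup"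
  unfolding ext_subgroup_def using one_mod_mem x_eq by blast

lemma ext_subgroup_cases:
  assumes "y1 \<in> ext_subgroup" "y2 \<in> ext_subgroup"
  obtains h1 h2 k1 k2 where "h1 \<in> H" "h2 \<in> H" "h1 * h2 mod d \<in> H"
    "y1 = h1 * x ^ k1 mod d" "y2 = h2 * x ^ k2 mod d"
  using assms subgroup unfolding ext_subgroup_def residue_subgroup_def by blast

lemma residue_subgroup_ext: "residue_subgroup d ext_subgroup"
  unfolding residue_subgroup_def
proof (intro conjI ballI)
  show "ext_subgroup \<subseteq> unit_residues d"
    unfolding ext_subgroup_def using residue_subgroup_mem[OF subgroup]
      x_coprime residue_subgroup_pos[OF subgroup]
    by (auto intro!: mod_in_unit_residues)
  show "1 mod d \<in> ext_subgroup"
    using subset_ext_subgroup one_mod_mem by blast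
  show "y1 * y2 mod d \<in> ext_subgroup" if "y1 \<in> ext_subgroup" "y2 \<in> ext_subgroup" for y1 y2
    using that by (cases rule: ext_subgroup_cases) (auto simp: ext_subgroup_def mult_mod_eq)
qed

lemma residue_char_ext: "residue_char d ext_subgroup ext_char"
  unfolding residue_char_def
proof (intro conjI ballI)
  have "z \<noteq> 0"
    using z m_pos power_m_mem char by (auto simp: residue_char_def power_0_left)
  then show "ext_char y \<noteq> 0" if "y \<in> ext_subgroup" for y
    using that char unfolding ext_subgroup_def residue_char_def by (auto simp: ext_char_eq)
  show "ext_char (y1 * y2 mod d) = ext_char y1 * ext_char y2"
    if "y1 \<in> ext_subgroup" "y2 \<in> ext_subgroup" for y1 y2
    using that
    by (cases rule: ext_subgroup_cases) (simp add: mult_mod_eq ext_char_eq psi_mult,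
      simp add: power_add)
qed

lemma ext_char_extends: "h \<in> H \<Longrightarrow> ext_char h = psi h"
  using ext_char_eq[of h 0] residue_subgroup_mem[OF subgroup] by simp

lemma ext_char_x: "ext_char x = z"
  using ext_char_eq[OF one_mod_mem, of 1] x_eq residue_char_1[OF subgroup char] by simp

end

lemma ex_complex_nth_root:
  fixes c :: complex
  assumes "0 < m"
  shows "\<exists>z. z ^ m = c"
proof (cases "c = 0")
  case True
  then show ?thesis
    using assms by (intro exI[of _ 0]) simp
next
  case False
  have "exp (Ln c / of_nat m) ^ m = exp (of_nat m * (Ln c / of_nat m))"
    by (rule exp_of_nat_mult[symmetric])
  also have "\<dots> = c"
    using assms False by simp
  finally show ?thesis
    by blast
qed

lemma residue_char_extend:
  assumes "residue_subgroup d H" "residue_char d H psi"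
  shows "\<exists>psi'. residue_char d (unit_residues d) psi' \<and> (\<forall>h\<in>H. psi' h = psi h)"
  using assms
proof (induction "card (unit_residues d - H)" arbitrary: H psi rule: less_induct)
  case less
  show ?case
  proof (cases "H = unit_residues d")
    case True
    then show ?thesis
      using less.prems(2) by (intro exI[of _ psi]) simp
  next
    case False
    moreover have "H \<subseteq> unit_residues d"
      using less.prems(1) by (simp add: residue_subgroup_def)
    ultimately obtain x where x: "x \<in> unit_residues d" "x \<notin> H"
      by blast
    obtain m where m: "0 < m" "x ^ m mod d \<in> H" "\<And>k. 0 < k \<Longrightarrow> k < m \<Longrightarrow> x ^ k mod d \<notin> H"
      using least_power_in_residue_subgroup[OF less.prems(1) x(1)] by blast
    obtain z :: complex where z: "z ^ m = psi (x ^ m mod d)"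
      using ex_complex_nth_root[OF m(1)] by blast
    interpret E: residue_char_extension d H psi x m z
      by unfold_locales (fact less.prems x(1) m z)+
    have "unit_residues d - E.ext_subgroup \<subset> unit_residues d - H"
      using E.subset_ext_subgroup E.x_mem_ext_subgroup x by blast
    then have "card (unit_residues d - E.ext_subgroup) < card (unit_residues d - H)"
      by (simp add: psubset_card_mono finite_unit_residues)
    then obtain psi' where "residue_char d (unit_residues d) psi'"
      "\<forall>h\<in>E.ext_subgroup. psi' h = E.ext_char h"
      using less.hyps E.residue_subgroup_ext E.residue_char_ext by blast
    then show ?thesis
      using E.subset_ext_subgroup E.ext_char_extends by (metis subsetD)
  qed
qed

lemma dirichlet_char_of_residue_char:
  assumes "0 < d" "residue_char d (unit_residues d) psi"
  shows "dirichlet_char d (\<lambda>n. if coprime n d then psi (n mod d) else 0)"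
  unfolding dirichlet_char_def
proof (intro conjI allI)
  fix m n :: nat
  have "psi (m * n mod d) = psi ((m mod d) * (n mod d) mod d)"
    by (simp add: mod_mult_eq)
  also have "\<dots> = psi (m mod d) * psi (n mod d)" if "coprime m d" "coprime n d"
    using assms that mod_in_unit_residues[OF assms(1)] by (simp add: residue_char_def)
  finally have "psi (m * n mod d) = psi (m mod d) * psi (n mod d)" if "coprime m d" "coprime n d"
    using that by blast
  then show "(if coprime (m * n) d then psi (m * n mod d) else 0) =
      (if coprime m d then psi (m mod d) else 0) * (if coprime n d then psi (n mod d) else 0)"
    by auto
next
  fix n
  show "(if coprime (n + d) d then psi ((n + d) mod d) else 0) =
    (if coprime n d then psi (n mod d) else 0)"
    by (simp add: coprime_add_modulus_iff)
  show "((if coprime n d then psi (n mod d) else 0) = 0) = (\<not> coprime n d)"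
    using assms mod_in_unit_residues[OF assms(1)] by (auto simp: residue_char_def)
qed

lemma cis_2pi_div_neq_1:
  assumes "2 \<le> m"
  shows "cis (2 * pi / real m) \<noteq> 1"
proof
  assume "cis (2 * pi / real m) = 1"
  then have "cos (2 * pi / real m) = 1"
    by (metis cis.sel(1) one_complex.sel(1))
  then obtain n :: int where n: "2 * pi / real m = real_of_int n * 2 * pi"
    using cos_one_2pi_int by blast
  then have "real_of_int n = 1 / real m"
    using assms by (simp add: field_simps)
  moreover have "0 < 1 / real m" "1 / real m < 1"
    using assms by auto
  ultimately have "0 < n" "n < 1"
    by (metis of_int_0_less_iff, metis of_int_less_1_iff)
  then show False
    by simp
qed

lemma dirichlet_char_separation:
  assumes d: "0 < d" and g: "coprime g d" "\<not> [g = 1] (mod d)"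
  obtains chi where "dirichlet_char d chi" "chi g \<noteq> 1"
proof -
  \<comment> \<open>Extend the trivial character of \<open>{1}\<close> so that \<open>g\<close> goes to a primitive \<open>m\<close>-th root of
    unity, \<open>m\<close> being the order of \<open>g\<close>.\<close>
  define H where "H = {1 mod d}"
  have H: "residue_subgroup d H"
    using d by (auto simp: H_def residue_subgroup_def unit_residues_def mod_mult_eq)
  have psi: "residue_char d H (\<lambda>_. 1)"
    by (simp add: residue_char_def)
  define x where "x = g mod d"
  have x: "x \<in> unit_residues d" "x \<notin> H"
    using d g by (auto simp: x_def H_def cong_def mod_in_unit_residues)
  obtain m where m: "0 < m" "x ^ m mod d \<in> H" "\<And>k. 0 < k \<Longrightarrow> k < m \<Longrightarrow> x ^ k mod d \<notin> H"
    using least_power_in_residue_subgroup[OF H x(1)] by blast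
  have "m \<noteq> 1"
    using m(2) x unfolding x_def by auto
  then have "2 \<le> m"
    using m(1) by simp
  define z where "z = cis (2 * pi / real m)"
  have "z ^ m = cis (real m * (2 * pi / real m))"
    unfolding z_def by (rule Complex.DeMoivre)
  also have "\<dots> = 1"
    using m(1) by simp
  finally have "z ^ m = 1" .
  interpret E: residue_char_extension d H "\<lambda>_. 1" x m z
    by unfold_locales (fact H psi x(1) m \<open>z ^ m = 1\<close>)+
  obtain psi where psi: "residue_char d (unit_residues d) psi"
    "\<forall>h\<in>E.ext_subgroup. psi h = E.ext_char h"
    using residue_char_extend[OF E.residue_subgroup_ext E.residue_char_ext] by blast
  show thesis
  proof
    show "dirichlet_char d (\<lambda>n. if coprime n d then psi (n mod d) else 0)"
      by (rule dirichlet_char_of_residue_char[OF d psi(1)])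
    show "(if coprime g d then psi (g mod d) else 0) \<noteq> 1"
      using g(1) psi(2) E.x_mem_ext_subgroup E.ext_char_x cis_2pi_div_neq_1[OF \<open>2 \<le> m\<close>]
      by (simp add: x_def z_def)
  qed
qed

section \<open>Orthogonality of Dirichlet characters\<close>

lemma sum_dirichlet_chars_apply:
  assumes d: "0 < d"
  shows "(\<Sum>chi | dirichlet_char d chi. chi k) =
         (if [k = 1] (mod d) then of_nat (card {chi. dirichlet_char d chi}) else 0)"
proof (cases "[k = 1] (mod d)")
  case True
  have "chi k = 1" if "dirichlet_char d chi" for chi
    using dirichlet_char_cong[OF that True] dirichlet_char_1[OF that] by simp
  then have "(\<Sum>chi | dirichlet_char d chi. chi k) = (\<Sum>chi | dirichlet_char d chi. 1)"
    by (intro sum.cong) auto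
  then show ?thesis
    using True by simp
next
  case not_1: False
  show ?thesis
  proof (cases "coprime k d")
    case False
    then show ?thesis
      using not_1 by (simp add: dirichlet_char_eq_0_if_not_coprime)
  next
    case True
    obtain c where c: "dirichlet_char d c" "c k \<noteq> 1"
      using dirichlet_char_separation[OF d True not_1] .
    have absorb: "cnj (c n) * (c n * chi n) = chi n" "c n * (cnj (c n) * chi n) = chi n"
      if "dirichlet_char d chi" for chi n
      using cnj_dirichlet_char_times_self[OF c(1) d, of n]
        dirichlet_char_eq_0_if_not_coprime[OF that, of n]
      by (auto simp: algebra_simps split: if_splits)
    \<comment> \<open>Multiplication by \<open>c\<close> permutes the characters.\<close>
    have "(\<Sum>chi | dirichlet_char d chi. c k * chi k) = (\<Sum>chi | dirichlet_char d chi. chi k)"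
      by (rule sum.reindex_bij_witness[where i = "\<lambda>chi n. cnj (c n) * chi n"
            and j = "\<lambda>chi n. c n * chi n"])
        (use absorb c(1) in \<open>auto intro: dirichlet_char_times dirichlet_char_cnj\<close>)
    then have "c k * (\<Sum>chi | dirichlet_char d chi. chi k) = (\<Sum>chi | dirichlet_char d chi. chi k)"
      by (simp add: sum_distrib_left)
    then have "(1 - c k) * (\<Sum>chi | dirichlet_char d chi. chi k) = 0"
      by (simp add: left_diff_distrib)
    then show ?thesis
      using c(2) not_1 by simp
  qed
qed

lemma sum_unit_residues_dirichlet_char:
  assumes d: "0 < d" and chi: "dirichlet_char d chi"
  shows "(\<Sum>j\<in>unit_residues d. chi j) =
         (if chi = principal_dirichlet_char d then of_nat (totient d) else 0)"
proof (cases "chi = principal_dirichlet_char d")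
  case True
  then have "(\<Sum>j\<in>unit_residues d. chi j) = of_nat (card (unit_residues d))"
    by (simp add: principal_dirichlet_char_def unit_residues_def)
  then show ?thesis
    using True card_unit_residues[OF d] by simp
next
  case False
  then obtain n where "chi n \<noteq> principal_dirichlet_char d n"
    by auto
  then have n: "coprime n d" "chi n \<noteq> 1"
    using dirichlet_char_eq_0_if_not_coprime[OF chi, of n]
    by (auto simp: principal_dirichlet_char_def split: if_splits)
  define j0 where "j0 = n mod d"
  have j0: "coprime j0 d" "chi j0 \<noteq> 1"
    using n d dirichlet_char_mod[OF chi] by (simp_all add: j0_def coprime_mod_left_iff)
  define f where "f j = j0 * j mod d" for j
  have "inj_on f (unit_residues d)"
  proof (rule inj_onI)
    fix x y
    assume "x \<in> unit_residues d" "y \<in> unit_residues d" "f x = f y"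
    then show "x = y"
      using cong_mult_lcancel_nat[OF j0(1)] by (simp add: f_def unit_residues_def cong_def)
  qed
  moreover have "f ` unit_residues d \<subseteq> unit_residues d"
    using d j0(1) by (auto simp: f_def unit_residues_def coprime_mod_left_iff)
  ultimately have "bij_betw f (unit_residues d) (unit_residues d)"
    by (simp add: bij_betw_def endo_inj_surj finite_unit_residues)
  then have "(\<Sum>j\<in>unit_residues d. chi j) = (\<Sum>j\<in>unit_residues d. chi (f j))"
    by (simp add: sum.reindex_bij_betw)
  also have "\<dots> = chi j0 * (\<Sum>j\<in>unit_residues d. chi j)"
    by (simp add: f_def dirichlet_char_mod[OF chi] dirichlet_char_mult[OF chi] sum_distrib_left)
  finally have "(1 - chi j0) * (\<Sum>j\<in>unit_residues d. chi j) = 0"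
    by (simp add: algebra_simps)
  then show ?thesis
    using j0(2) False by simp
qed

theorem card_dirichlet_chars:
  assumes d: "0 < d"
  shows "card {chi. dirichlet_char d chi} = totient d"
proof -
  let ?X = "{chi. dirichlet_char d chi}" and ?U = "unit_residues d"
  have "(\<Sum>j\<in>?U. \<Sum>chi\<in>?X. chi j) = (\<Sum>j\<in>?U. if j = 1 mod d then of_nat (card ?X) else 0)"
  proof (rule sum.cong[OF refl])
    fix j
    assume "j \<in> ?U"
    then have "[j = 1] (mod d) \<longleftrightarrow> j = 1 mod d"
      by (simp add: unit_residues_def cong_def)
    then show "(\<Sum>chi\<in>?X. chi j) = (if j = 1 mod d then of_nat (card ?X) else 0)"
      using sum_dirichlet_chars_apply[OF d, of j] by simp
  qed
  also have "\<dots> = of_nat (card ?X)"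
    using mod_in_unit_residues[OF d, of 1] by (simp add: finite_unit_residues)
  finally have "(of_nat (card ?X) :: complex) = (\<Sum>j\<in>?U. \<Sum>chi\<in>?X. chi j)"
    by simp
  also have "\<dots> = (\<Sum>chi\<in>?X. \<Sum>j\<in>?U. chi j)"
    by (rule sum.swap)
  also have "\<dots> = (\<Sum>chi\<in>?X. if chi = principal_dirichlet_char d then of_nat (totient d) else 0)"
    using sum_unit_residues_dirichlet_char[OF d] by (intro sum.cong) auto
  also have "\<dots> = of_nat (totient d)"
    using dirichlet_char_principal finite_dirichlet_chars[OF d] by simp
  finally show ?thesis
    by (simp only: of_nat_eq_iff)
qed

theorem dirichlet_char_orthogonality:
  assumes d: "0 < d" and a: "coprime a d"
  shows "(\<Sum>chi | dirichlet_char d chi. cnj (chi a) * chi n) =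
         (if [n = a] (mod d) then of_nat (totient d) else 0)"
proof -
  obtain a' where a': "[a * a' = 1] (mod d)"
    using cong_solve_coprime_nat[OF a] by auto
  have "cnj (chi a) * chi n = chi (a' * n)" if chi: "dirichlet_char d chi" for chi
  proof -
    have "chi a * chi a' = 1"
      using dirichlet_char_cong[OF chi a']
      by (metis dirichlet_char_mult[OF chi] dirichlet_char_1[OF chi])
    then have "cnj (chi a) = cnj (chi a) * chi a * chi a'"
      by (simp add: mult.assoc)
    also have "\<dots> = chi a'"
      using cnj_dirichlet_char_times_self[OF chi d, of a] a by simp
    finally show ?thesis
      by (simp add: dirichlet_char_mult[OF chi])
  qed
  then have "(\<Sum>chi | dirichlet_char d chi. cnj (chi a) * chi n) =
             (\<Sum>chi | dirichlet_char d chi. chi (a' * n))"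
    by (intro sum.cong) auto
  moreover have "[a' * n = 1] (mod d) \<longleftrightarrow> [n = a] (mod d)"
  proof
    assume "[a' * n = 1] (mod d)"
    then have "[a * (a' * n) = a * 1] (mod d)"
      by (rule cong_scalar_left)
    moreover have "[a * a' * n = 1 * n] (mod d)"
      using a' by (rule cong_scalar_right)
    ultimately show "[n = a] (mod d)"
      by (metis cong_sym cong_trans mult.assoc mult_1 mult_1_right)
  next
    assume "[n = a] (mod d)"
    then have "[a' * n = a' * a] (mod d)"
      by (rule cong_scalar_left)
    then show "[a' * n = 1] (mod d)"
      using a' by (metis cong_trans mult.commute)
  qed
  ultimately show ?thesis
    using sum_dirichlet_chars_apply[OF d, of "a' * n"] card_dirichlet_chars[OF d] by simp
qed

section \<open>Euler products\<close>

definition smooth_numbers :: "nat set \<Rightarrow> nat set" where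
  "smooth_numbers P = {n. 0 < n \<and> prime_factors n \<subseteq> P}"

lemma multiplicative_prod_prime_powers:
  fixes F :: "nat \<Rightarrow> 'a :: comm_monoid_mult"
  assumes F1: "F 1 = 1" and F_mult: "\<And>m n. coprime m n \<Longrightarrow> F (m * n) = F m * F n"
    and "finite P" "\<And>p. p \<in> P \<Longrightarrow> prime p"
  shows "F (\<Prod>p\<in>P. p ^ e p) = (\<Prod>p\<in>P. F (p ^ e p))"
  using assms(3,4)
proof (induction P rule: finite_induct)
  case empty
  then show ?case
    using F1 by simp
next
  case (insert q P)
  have "coprime (q ^ e q) (\<Prod>p\<in>P. p ^ e p)"
  proof (rule prod_coprime_right)
    fix p
    assume "p \<in> P"
    then have "coprime q p"
      using insert primes_coprime[of q p] by auto
    then show "coprime (q ^ e q) (p ^ e p)"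
      by simp
  qed
  then show ?case
    using insert F_mult by simp
qed

lemma inj_on_prime_power_products:
  fixes P :: "nat set"
  assumes P: "finite P" "\<And>p. p \<in> P \<Longrightarrow> prime p"
  shows "inj_on (\<lambda>e. \<Prod>p\<in>P. p ^ e p) (PiE P (\<lambda>_. UNIV))"
proof (rule inj_onI, rule ext)
  fix e1 e2 q
  assume e: "e1 \<in> PiE P (\<lambda>_. UNIV)" "e2 \<in> PiE P (\<lambda>_. UNIV)"
    and eq: "(\<Prod>p\<in>P. p ^ e1 p) = (\<Prod>p\<in>P. p ^ e2 p)"
  show "e1 q = e2 q"
  proof (cases "q \<in> P")
    case True
    then show ?thesis
      using multiplicity_prod_prime_powers[OF P P(2)[OF True]] eq by metis
  next
    case False
    then show ?thesis
      using PiE_arb[OF e(1) False] PiE_arb[OF e(2) False] by simp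
  qed
qed

lemma prime_power_products_image:
  assumes P: "finite P" "\<And>p. p \<in> P \<Longrightarrow> prime p"
  shows "(\<lambda>e. \<Prod>p\<in>P. p ^ e p) ` PiE P (\<lambda>_. UNIV) = smooth_numbers P"
proof (intro equalityI subsetI)
  fix n
  assume "n \<in> (\<lambda>e. \<Prod>p\<in>P. p ^ e p) ` PiE P (\<lambda>_. UNIV)"
  then obtain e where n: "n = (\<Prod>p\<in>P. p ^ e p)"
    by blast
  have "0 < n"
    unfolding n using P(2) by (intro prod_pos) (simp add: prime_gt_0_nat)
  moreover have "q \<in> P" if "q \<in> prime_factors n" for q
  proof -
    have "prime q" "0 < multiplicity q n"
      using that by (auto simp: prime_factors_multiplicity)
    then show ?thesis
      using multiplicity_prod_prime_powers[OF P, of q e] unfolding n by (auto split: if_splits)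
  qed
  ultimately show "n \<in> smooth_numbers P"
    by (auto simp: smooth_numbers_def)
next
  fix n
  assume "n \<in> smooth_numbers P"
  then have n: "0 < n" "prime_factors n \<subseteq> P"
    by (auto simp: smooth_numbers_def)
  have "n = (\<Prod>p\<in>prime_factors n. p ^ multiplicity p n)"
    using prime_factorization_nat[OF n(1)] .
  also have "\<dots> = (\<Prod>p\<in>P. p ^ multiplicity p n)"
    using n(2) P by (intro prod.mono_neutral_left) (auto simp: prime_factors_multiplicity)
  also have "\<dots> = (\<Prod>p\<in>P. p ^ restrict (\<lambda>p. multiplicity p n) P p)"
    by (rule prod.cong) simp_all
  finally show "n \<in> (\<lambda>e. \<Prod>p\<in>P. p ^ e p) ` PiE P (\<lambda>_. UNIV)"
    by (rule image_eqI[where x = "restrict (\<lambda>p. multiplicity p n) P"]) simp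
qed

lemma infsum_smooth_numbers:
  fixes F :: "nat \<Rightarrow> 'a :: {banach, real_normed_field}"
  assumes F1: "F 1 = 1" and F_mult: "\<And>m n. coprime m n \<Longrightarrow> F (m * n) = F m * F n"
    and F_abs: "(\<lambda>n. norm (F n)) summable_on UNIV"
    and P: "finite P" "\<And>p. p \<in> P \<Longrightarrow> prime p"
  shows "infsum F (smooth_numbers P) = (\<Prod>p\<in>P. \<Sum>\<^sub>\<infinity>k. F (p ^ k))"
proof -
  have "(\<lambda>k. norm (F (p ^ k))) summable_on UNIV" if "p \<in> P" for p
  proof -
    have "inj (\<lambda>k. p ^ k)"
      using prime_gt_1_nat[OF P(2)[OF that]] by (auto intro: injI simp: power_inject_exp)
    moreover have "(\<lambda>n. norm (F n)) summable_on range (\<lambda>k. p ^ k)"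
      using F_abs summable_on_subset_banach by blast
    ultimately show ?thesis
      by (simp add: summable_on_reindex o_def)
  qed
  then have "(\<Prod>p\<in>P. \<Sum>\<^sub>\<infinity>k. F (p ^ k)) = (\<Sum>\<^sub>\<infinity>e\<in>PiE P (\<lambda>_. UNIV). \<Prod>p\<in>P. F (p ^ e p))"
    using P(1) by (intro infsum_prod_PiE_abs[symmetric]) auto
  also have "\<dots> = (\<Sum>\<^sub>\<infinity>e\<in>PiE P (\<lambda>_. UNIV). F (\<Prod>p\<in>P. p ^ e p))"
    using multiplicative_prod_prime_powers[OF F1 F_mult P] by simp
  also have "\<dots> = infsum F (smooth_numbers P)"
    using inj_on_prime_power_products[OF P] prime_power_products_image[OF P]
    by (intro infsum_reindex_bij_betw bij_betw_imageI)
  finally show ?thesis ..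
qed

lemma tendsto_infsum_greaterThan_0:
  fixes G :: "nat \<Rightarrow> real"
  assumes "G summable_on UNIV"
  shows "(\<lambda>N. infsum G {N<..}) \<longlonglongrightarrow> 0"
proof -
  have "G summable_on A" for A
    using assms summable_on_subset_banach by blast
  moreover have "{..N} \<union> {N<..} = UNIV" "{..N} \<inter> {N<..} = {}" for N :: nat
    by auto
  ultimately have "infsum G {N<..} = infsum G UNIV - sum G {..N}" for N
    using infsum_Un_disjoint[of G "{..N}" "{N<..}"] by simp
  moreover have "(\<lambda>N. sum G {..N}) \<longlonglongrightarrow> infsum G UNIV"
    using has_sum_imp_sums[OF has_sum_infsum[OF assms]] by (simp add: sums_def_le)
  ultimately show ?thesis
    using tendsto_diff[OF tendsto_const, of "\<lambda>N. sum G {..N}"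
      "infsum G UNIV" sequentially "infsum G UNIV"]
    by simp
qed

lemma smooth_numbers_primes_le:
  assumes "0 < n" "n \<le> N"
  shows "n \<in> smooth_numbers {p. prime p \<and> p \<le> N}"
proof -
  have "p \<le> N" if "p \<in> prime_factors n" for p
    using dvd_imp_le[OF in_prime_factors_imp_dvd[OF that]] assms by simp
  then show ?thesis
    using assms(1) by (auto simp: smooth_numbers_def in_prime_factors_imp_prime)
qed

lemma norm_infsum_minus_infsum_smooth_le:
  fixes F :: "nat \<Rightarrow> 'a :: banach"
  assumes F0: "F 0 = 0" and F_abs: "(\<lambda>n. norm (F n)) summable_on UNIV"
  shows "norm ((\<Sum>\<^sub>\<infinity>n. F n) - infsum F (smooth_numbers {p. prime p \<and> p \<le> N}))
    \<le> (\<Sum>\<^sub>\<infinity>n\<in>{N<..}. norm (F n))"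
proof -
  define S where "S = smooth_numbers {p. prime p \<and> p \<le> N}"
  have F_summable: "F summable_on A" for A
    using abs_summable_summable[OF F_abs] summable_on_subset_banach by blast
  have norm_summable: "(\<lambda>n. norm (F n)) summable_on A" for A
    using F_abs summable_on_subset_banach by blast
  have "(\<Sum>\<^sub>\<infinity>n. F n) = infsum F S + infsum F (- S)"
    using infsum_Un_disjoint[OF F_summable F_summable, of S "- S"] by simp
  then have "norm ((\<Sum>\<^sub>\<infinity>n. F n) - infsum F S) = norm (infsum F (- S))"
    by simp
  also have "\<dots> \<le> (\<Sum>\<^sub>\<infinity>n\<in>- S. norm (F n))"
    by (rule norm_infsum_bound[OF norm_summable])
  also have "\<dots> \<le> (\<Sum>\<^sub>\<infinity>n\<in>{N<..}. norm (F n))"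
  proof (rule infsum_mono_neutral[OF norm_summable norm_summable])
    fix n
    assume "n \<in> - S - {N<..}"
    then have "n = 0"
      using smooth_numbers_primes_le[of n N] by (auto simp: S_def)
    then show "norm (F n) \<le> 0"
      by (simp add: F0)
  qed auto
  finally show ?thesis
    by (simp add: S_def)
qed

theorem euler_product_LIMSEQ:
  fixes F :: "nat \<Rightarrow> 'a :: {banach, real_normed_field}"
  assumes F0: "F 0 = 0" and F1: "F 1 = 1"
    and F_mult: "\<And>m n. coprime m n \<Longrightarrow> F (m * n) = F m * F n"
    and F_abs: "(\<lambda>n. norm (F n)) summable_on UNIV"
  shows "(\<lambda>N. \<Prod>p | prime p \<and> p \<le> N. \<Sum>\<^sub>\<infinity>k. F (p ^ k)) \<longlonglongrightarrow> (\<Sum>\<^sub>\<infinity>n. F n)"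
proof -
  define S where "S N = smooth_numbers {p. prime p \<and> p \<le> N}" for N
  have "(\<lambda>N. (\<Sum>\<^sub>\<infinity>n. F n) - infsum F (S N)) \<longlonglongrightarrow> 0"
    using norm_infsum_minus_infsum_smooth_le[OF F0 F_abs]
    by (intro Lim_null_comparison[OF _ tendsto_infsum_greaterThan_0[OF F_abs]]) (simp add: S_def)
  then have "(\<lambda>N. (\<Sum>\<^sub>\<infinity>n. F n) - ((\<Sum>\<^sub>\<infinity>n. F n) - infsum F (S N))) \<longlonglongrightarrow> (\<Sum>\<^sub>\<infinity>n. F n) - 0"
    by (intro tendsto_diff tendsto_const)
  then have "(\<lambda>N. infsum F (S N)) \<longlonglongrightarrow> (\<Sum>\<^sub>\<infinity>n. F n)"
    by simp
  moreover have "infsum F (S N) = (\<Prod>p | prime p \<and> p \<le> N. \<Sum>\<^sub>\<infinity>k. F (p ^ k))" for N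
    unfolding S_def by (rule infsum_smooth_numbers[OF F1 F_mult F_abs]) auto
  ultimately show ?thesis
    by simp
qed

lemma LIMSEQ_prod_primes_prodinf:
  fixes f :: "nat \<Rightarrow> 'a :: {banach, real_normed_field}"
  assumes bound: "\<And>p. prime p \<Longrightarrow> norm (f p - 1) \<le> C / real p ^ 2"
  shows "(\<lambda>N. \<Prod>p | prime p \<and> p \<le> N. f p) \<longlonglongrightarrow> (\<Prod>p. if prime p then f p else 1)"
proof -
  define g where "g = (\<lambda>p. if prime p then f p else 1)"
  have "0 \<le> C / real 2 ^ 2"
    using order.trans[OF norm_ge_zero bound[OF two_is_prime_nat]] .
  then have "0 \<le> C"
    by simp
  have g_bound: "norm (norm (g n - 1)) \<le> C * inverse (real n ^ 2)" for n
  proof (cases "prime n")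
    case True
    then show ?thesis
      using bound[of n] by (simp add: g_def divide_inverse)
  qed (simp add: g_def \<open>0 \<le> C\<close>)
  have "summable (\<lambda>n. C * inverse (real n ^ 2))"
    by (intro summable_mult inverse_power_summable) simp
  then have "summable (\<lambda>n. norm (g n - 1))"
    by (rule summable_comparison_test') (rule g_bound)
  then have "convergent_prod g"
    by (intro abs_convergent_prod_imp_convergent_prod summable_imp_abs_convergent_prod)
  then have "(\<lambda>N. \<Prod>n\<le>N. g n) \<longlonglongrightarrow> prodinf g"
    by (rule convergent_prod_LIMSEQ)
  moreover have "(\<Prod>n\<le>N. g n) = (\<Prod>p | prime p \<and> p \<le> N. f p)" for N
  proof -
    have "{p \<in> {..N}. prime p} = {p. prime p \<and> p \<le> N}"
      by auto
    then show ?thesis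
      using prod.inter_filter[of "{..N}" f prime] by (simp add: g_def)
  qed
  ultimately show ?thesis
    by (simp add: g_def)
qed

section \<open>The weight function \<open>r\<close>\<close>

definition r_weight_factor :: "nat \<Rightarrow> real" where
  "r_weight_factor p = ((real p)\<^sup>2 - 1) / ((real p)\<^sup>2 - real p - 1)"

definition r_weight :: "nat \<Rightarrow> real" where
  "r_weight t = (\<Prod>p\<in>prime_factors t. r_weight_factor p)"

lemma r_fun_eq: "r_fun t = r_weight t / (real t)\<^sup>2"
  unfolding r_fun_def r_weight_def r_weight_factor_def by simp

lemma r_weight_factor_denominator_pos:
  assumes "2 \<le> p"
  shows "0 < (real p)\<^sup>2 - real p - 1"
proof -
  have "2 * 1 \<le> real p * (real p - 1)"
    using assms by (intro mult_mono) auto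
  then show ?thesis
    by (simp add: power2_eq_square algebra_simps)
qed

lemma r_weight_factor_ge_1: "2 \<le> p \<Longrightarrow> 1 \<le> r_weight_factor p"
  using r_weight_factor_denominator_pos[of p] by (simp add: r_weight_factor_def)

lemma r_weight_factor_squared_le:
  assumes "prime p"
  shows "(r_weight_factor p)\<^sup>2 \<le> (if p = 2 then 9/2 else 1) * real p"
proof (cases "p = 2")
  case True
  then show ?thesis
    by (simp add: r_weight_factor_def power2_eq_square)
next
  case False
  then have p: "3 \<le> real p"
    using prime_ge_2_nat[OF assms] by simp
  have "0 \<le> (3 * real p + 1) * (real p - 3)"
    using p by simp
  then have "5 * ((real p)\<^sup>2 - 1) \<le> 8 * ((real p)\<^sup>2 - real p - 1)"
    by (simp add: power2_eq_square algebra_simps)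
  then have "r_weight_factor p \<le> 8 / 5"
    using r_weight_factor_denominator_pos[of p] p by (simp add: r_weight_factor_def field_simps)
  then have "(r_weight_factor p)\<^sup>2 \<le> (8 / 5)\<^sup>2"
    using r_weight_factor_ge_1[of p] p by (intro power_mono) auto
  also have "\<dots> \<le> real p"
    using p by (simp add: power2_eq_square)
  finally show ?thesis
    using False by simp
qed

lemma prod_prime_factors_le:
  assumes "0 < (n::nat)"
  shows "(\<Prod>p\<in>prime_factors n. p) \<le> n"
proof -
  have "(\<Prod>p\<in>prime_factors n. p) \<le> (\<Prod>p\<in>prime_factors n. p ^ multiplicity p n)"
    by (intro prod_mono conjI self_le_power)
      (auto simp: prime_factors_multiplicity prime_gt_0_nat Suc_leI)
  also have "\<dots> = n"
    using prime_factorization_nat[OF assms] by simp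
  finally show ?thesis .
qed

lemma r_weight_ge_1: "1 \<le> r_weight t"
  unfolding r_weight_def
  by (intro prod_ge_1) (auto intro: r_weight_factor_ge_1 prime_ge_2_nat)

lemma r_weight_squared_le:
  assumes "0 < t"
  shows "(r_weight t)\<^sup>2 \<le> 9/2 * real t"
proof -
  have "(r_weight t)\<^sup>2 = (\<Prod>p\<in>prime_factors t. (r_weight_factor p)\<^sup>2)"
    by (simp add: r_weight_def prod_power_distrib)
  also have "\<dots> \<le> (\<Prod>p\<in>prime_factors t. (if p = 2 then 9/2 else 1) * real p)"
  proof (rule prod_mono)
    fix p
    assume "p \<in> prime_factors t"
    then show "0 \<le> (r_weight_factor p)\<^sup>2 \<and>
      (r_weight_factor p)\<^sup>2 \<le> (if p = 2 then 9/2 else 1) * real p"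
      using r_weight_factor_squared_le[OF in_prime_factors_imp_prime] by simp
  qed
  also have "\<dots> = (\<Prod>p\<in>prime_factors t. if p = 2 then 9/2 else 1) * real (\<Prod>p\<in>prime_factors t. p)"
    by (simp add: prod.distrib)
  also have "\<dots> \<le> 9/2 * real t"
  proof (rule mult_mono)
    show "(\<Prod>p\<in>prime_factors t. if p = 2 then 9/2 else 1) \<le> (9/2 :: real)"
      by (simp add: prod.delta)
    show "real (\<Prod>p\<in>prime_factors t. p) \<le> real t"
      using prod_prime_factors_le[OF assms] by (simp only: of_nat_le_iff)
  qed (auto intro: prod_nonneg)
  finally show ?thesis .
qed

lemma r_fun_nonneg: "0 \<le> r_fun t"
  using r_weight_ge_1[of t] by (simp add: r_fun_eq)

lemma r_fun_le_powr: "r_fun t \<le> 3 * real t powr (-3/2)"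
proof (cases "t = 0")
  case True
  then show ?thesis
    by (simp add: r_fun_eq)
next
  case False
  then have t: "0 < real t"
    by simp
  have "(r_weight t)\<^sup>2 \<le> (3 * sqrt (real t))\<^sup>2"
    using r_weight_squared_le[of t] False by (simp add: power_mult_distrib)
  then have "r_weight t \<le> 3 * sqrt (real t)"
    by (rule power2_le_imp_le) simp
  then have "r_fun t \<le> 3 * sqrt (real t) / (real t)\<^sup>2"
    using t by (simp add: r_fun_eq divide_right_mono)
  also have "\<dots> = 3 * (real t powr (1/2) / real t powr 2)"
    using t by (simp add: powr_half_sqrt)
  also have "\<dots> = 3 * real t powr (1/2 - 2)"
    by (simp only: powr_diff)
  also have "\<dots> = 3 * real t powr (-3/2)"
    by simp
  finally show ?thesis .
qed

lemma summable_r_fun: "summable r_fun"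
proof (rule summable_comparison_test')
  show "summable (\<lambda>t. 3 * real t powr (-3/2))"
    by (intro summable_mult) (simp add: summable_real_powr_iff)
  show "norm (r_fun t) \<le> 3 * real t powr (-3/2)" for t
    using r_fun_nonneg r_fun_le_powr by simp
qed

lemma r_fun_summable_on: "r_fun summable_on A"
  using summable_r_fun r_fun_nonneg summable_on_subset_banach
  by (metis subset_UNIV summable_on_UNIV_nonneg_real_iff)

section \<open>The twisted Dirichlet series\<close>

definition r_weight_outside :: "nat \<Rightarrow> nat \<Rightarrow> real" where
  "r_weight_outside w n = (\<Prod>p\<in>prime_factors n - prime_factors w. r_weight_factor p)"

lemma r_weight_mult:
  assumes "0 < w" "0 < n"
  shows "r_weight (w * n) = r_weight w * r_weight_outside w n"
proof -
  have "prime_factors (w * n) = prime_factors w \<union> (prime_factors n - prime_factors w)"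
    using assms by (auto simp: prime_factors_product)
  then show ?thesis
    unfolding r_weight_def r_weight_outside_def by (simp only:) (rule prod.union_disjoint, auto)
qed

lemma prime_factors_disjoint_if_coprime:
  assumes "coprime m (n::nat)"
  shows "prime_factors m \<inter> prime_factors n = {}"
proof -
  have "\<not> (p dvd m \<and> p dvd n)" if "prime p" for p
    using assms that coprime_common_divisor not_prime_unit by blast
  then show ?thesis
    by (auto simp: in_prime_factors_iff)
qed

lemma r_weight_outside_mult:
  assumes "coprime m n" "0 < m" "0 < n"
  shows "r_weight_outside w (m * n) = r_weight_outside w m * r_weight_outside w n"
proof -
  have "prime_factors (m * n) - prime_factors w =
        (prime_factors m - prime_factors w) \<union> (prime_factors n - prime_factors w)"
    using assms(2,3) by (auto simp: prime_factors_product)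
  moreover have "(prime_factors m - prime_factors w) \<inter> (prime_factors n - prime_factors w) = {}"
    using prime_factors_disjoint_if_coprime[OF assms(1)] by blast
  ultimately show ?thesis
    unfolding r_weight_outside_def by (simp only:) (rule prod.union_disjoint, auto)
qed

lemma r_weight_outside_prime_power:
  assumes "prime p" "0 < k" "0 < w"
  shows "r_weight_outside w (p ^ k) = (if p dvd w then 1 else r_weight_factor p)"
proof -
  have "prime_factors (p ^ k) = {p}"
    using assms by (simp add: prime_factors_power prime_prime_factors)
  moreover have "p \<in> prime_factors w \<longleftrightarrow> p dvd w"
    using assms by (auto simp: in_prime_factors_iff)
  ultimately have "prime_factors (p ^ k) - prime_factors w = (if p dvd w then {} else {p})"
    by auto
  then show ?thesis
    by (simp add: r_weight_outside_def)
qed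

lemma r_weight_outside_bounds: "1 \<le> r_weight_outside w n" "r_weight_outside w n \<le> r_weight n"
proof -
  have ge_1: "1 \<le> (\<Prod>p\<in>B. r_weight_factor p)" if "B \<subseteq> prime_factors n" for B
    using that by (intro prod_ge_1) (auto intro: r_weight_factor_ge_1 prime_ge_2_nat)
  then show "1 \<le> r_weight_outside w n"
    unfolding r_weight_outside_def by blast
  have "r_weight n = r_weight_outside w n *
    (\<Prod>p\<in>prime_factors n \<inter> prime_factors w. r_weight_factor p)"
    unfolding r_weight_def r_weight_outside_def
    by (subst prod.subset_diff[of "prime_factors n \<inter> prime_factors w"]) (auto simp: Diff_Int)
  then show "r_weight_outside w n \<le> r_weight n"
    using ge_1[of "prime_factors n \<inter> prime_factors w"] \<open>1 \<le> r_weight_outside w n\<close>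
    by (metis inf_le1 mult_le_cancel_left1 order.trans zero_le_one less_le_not_le)
qed

definition r_twist :: "nat \<Rightarrow> (nat \<Rightarrow> complex) \<Rightarrow> nat \<Rightarrow> complex" where
  "r_twist w chi n = chi n * of_real (r_weight_outside w n) / of_nat n ^ 2"

lemma r_twist_0: "r_twist w chi 0 = 0"
  by (simp add: r_twist_def)

lemma r_twist_1: "dirichlet_char d chi \<Longrightarrow> r_twist w chi 1 = 1"
  using dirichlet_char_1[of d chi] by (simp add: r_twist_def r_weight_outside_def)

lemma r_twist_mult:
  assumes "dirichlet_char d chi" "coprime m n"
  shows "r_twist w chi (m * n) = r_twist w chi m * r_twist w chi n"
proof (cases "m = 0 \<or> n = 0")
  case True
  then show ?thesis
    by (auto simp: r_twist_def)
next
  case False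
  then show ?thesis
    using assms r_weight_outside_mult[OF assms(2)]
    by (simp add: r_twist_def dirichlet_char_mult power_mult_distrib)
qed

lemma norm_r_twist_le:
  assumes "dirichlet_char d chi" "0 < d"
  shows "norm (r_twist w chi n) \<le> r_fun n"
proof -
  have "norm (r_twist w chi n) = norm (chi n) * r_weight_outside w n / (real n)\<^sup>2"
    using r_weight_outside_bounds(1)[of w n]
    by (simp add: r_twist_def norm_mult norm_divide norm_power)
  also have "\<dots> \<le> 1 * r_weight n / (real n)\<^sup>2"
    using norm_dirichlet_char_le[OF assms] r_weight_outside_bounds[of w n]
    by (intro divide_right_mono mult_mono) auto
  finally show ?thesis
    by (simp add: r_fun_eq)
qed

lemma r_twist_abs_summable:
  assumes "dirichlet_char d chi" "0 < d"
  shows "(\<lambda>n. norm (r_twist w chi n)) summable_on UNIV"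
proof -
  have "summable (\<lambda>n. norm (r_twist w chi n))"
    by (rule summable_comparison_test'[OF summable_r_fun]) (simp add: norm_r_twist_le[OF assms])
  then show ?thesis
    by (simp add: summable_on_UNIV_nonneg_real_iff)
qed

lemma dirichlet_char_neq_square:
  assumes "dirichlet_char d chi" "0 < d" "2 \<le> p"
  shows "chi p \<noteq> of_nat p ^ 2"
proof
  assume "chi p = of_nat p ^ 2"
  then have "(real p)\<^sup>2 \<le> 1"
    using norm_dirichlet_char_le[OF assms(1,2), of p] by (simp add: norm_power)
  moreover have "2\<^sup>2 \<le> (real p)\<^sup>2"
    using assms(3) by (intro power_mono) auto
  ultimately show False
    by simp
qed

definition r_twist_euler_factor :: "nat \<Rightarrow> (nat \<Rightarrow> complex) \<Rightarrow> nat \<Rightarrow> complex" where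
  "r_twist_euler_factor w chi p =
     1 + of_real (if p dvd w then 1 else r_weight_factor p) * chi p / (of_nat p ^ 2 - chi p)"

lemma has_sum_1_plus_geometric:
  fixes q h :: "'a :: {real_normed_field, banach}"
  assumes "norm q < 1"
  shows "((\<lambda>k. if k = 0 then 1 else h * q ^ k) has_sum (1 + h * q / (1 - q))) UNIV"
proof -
  have "summable (\<lambda>k. norm (q ^ k))"
    using assms by (simp add: norm_power summable_geometric)
  then have "((\<lambda>k. q ^ k) has_sum (1 / (1 - q))) UNIV"
    using geometric_sums[OF assms] by (rule norm_summable_imp_has_sum)
  moreover have "((\<lambda>k. if k = 0 then 1 - h else 0) has_sum (1 - h)) UNIV"
    by (rule has_sum_finite_neutralI[where B = "{0}"]) auto
  ultimately have "((\<lambda>k. h * q ^ k + (if k = 0 then 1 - h else 0)) has_sum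
    (h * (1 / (1 - q)) + (1 - h))) UNIV"
    by (intro has_sum_add has_sum_cmult_right)
  moreover have "(\<lambda>k. h * q ^ k + (if k = 0 then 1 - h else 0)) =
    (\<lambda>k. if k = 0 then 1 else h * q ^ k)"
    by auto
  moreover have "1 - q \<noteq> 0"
    using assms by auto
  then have "h * (1 / (1 - q)) + (1 - h) = 1 + h * q / (1 - q)"
    by (simp add: field_simps)
  ultimately show ?thesis
    by (simp only:)
qed

lemma r_twist_prime_power:
  assumes chi: "dirichlet_char d chi" and p: "prime p" and w: "0 < w" and "0 < k"
  shows "r_twist w chi (p ^ k) =
         of_real (if p dvd w then 1 else r_weight_factor p) * (chi p / of_nat p ^ 2) ^ k"
  using r_weight_outside_prime_power[OF p \<open>0 < k\<close> w] dirichlet_char_power[OF chi]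
  by (simp add: r_twist_def power_divide power_mult[symmetric] mult.commute)

lemma infsum_r_twist_prime_powers:
  assumes chi: "dirichlet_char d chi" and d: "0 < d" and p: "prime p" and w: "0 < w"
  shows "(\<Sum>\<^sub>\<infinity>k. r_twist w chi (p ^ k)) = r_twist_euler_factor w chi p"
proof -
  define h where "h = complex_of_real (if p dvd w then 1 else r_weight_factor p)"
  define q where "q = chi p / of_nat p ^ 2"
  have p_pos: "(of_nat p :: complex) \<noteq> 0" and p_chi: "of_nat p ^ 2 - chi p \<noteq> 0"
    using p dirichlet_char_neq_square[OF chi d prime_ge_2_nat[OF p]] by auto
  have "norm q \<le> 1 / (real p)\<^sup>2"
    using norm_dirichlet_char_le[OF chi d, of p]
    by (simp add: q_def norm_divide norm_power divide_right_mono)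
  also have "\<dots> < 1"
    using prime_ge_2_nat[OF p] by (simp add: power2_eq_square less_1_mult)
  finally have "norm q < 1" .
  moreover have "(\<lambda>k. r_twist w chi (p ^ k)) = (\<lambda>k. if k = 0 then 1 else h * q ^ k)"
    using r_twist_1[OF chi] r_twist_prime_power[OF chi p w] by (auto simp: fun_eq_iff h_def q_def)
  ultimately have "(\<Sum>\<^sub>\<infinity>k. r_twist w chi (p ^ k)) = 1 + h * q / (1 - q)"
    using has_sum_1_plus_geometric infsumI by metis
  also have "h * q / (1 - q) = h * chi p / (of_nat p ^ 2 - chi p)"
    using p_pos p_chi by (simp add: q_def field_simps)
  finally show ?thesis
    by (simp only: r_twist_euler_factor_def h_def)
qed

lemma r_twist_euler_product:
  assumes chi: "dirichlet_char d chi" and d: "0 < d" and w: "0 < w"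
  shows "(\<lambda>N. \<Prod>p | prime p \<and> p \<le> N. r_twist_euler_factor w chi p) \<longlonglongrightarrow> (\<Sum>\<^sub>\<infinity>n. r_twist w chi n)"
proof -
  have "(\<lambda>N. \<Prod>p | prime p \<and> p \<le> N. \<Sum>\<^sub>\<infinity>k. r_twist w chi (p ^ k)) \<longlonglongrightarrow> (\<Sum>\<^sub>\<infinity>n. r_twist w chi n)"
    by (rule euler_product_LIMSEQ[OF r_twist_0 r_twist_1[OF chi]
      r_twist_mult[OF chi] r_twist_abs_summable[OF chi d]])
  moreover have "(\<Prod>p | prime p \<and> p \<le> N. \<Sum>\<^sub>\<infinity>k. r_twist w chi (p ^ k)) =
                 (\<Prod>p | prime p \<and> p \<le> N. r_twist_euler_factor w chi p)" for N
    using infsum_r_twist_prime_powers[OF chi d _ w] by (intro prod.cong) auto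
  ultimately show ?thesis
    by simp
qed

section \<open>Local factors of \<open>A\<close> and \<open>A\<^sub>\<chi>\<close>\<close>

definition A_factor :: "nat \<Rightarrow> complex" where
  "A_factor p = 1 - 1 / (of_nat p * (of_nat p - 1))"

definition A_chi_factor :: "(nat \<Rightarrow> complex) \<Rightarrow> nat \<Rightarrow> complex" where
  "A_chi_factor chi p = 1 + ((chi p - 1) * of_nat p) / ((of_nat p ^ 2 - chi p) * (of_nat p - 1))"

lemma A_const_LIMSEQ: "(\<lambda>N. \<Prod>p | prime p \<and> p \<le> N. A_factor p) \<longlonglongrightarrow> complex_of_real A_const"
proof -
  have "norm ((1 - 1 / (real p * (real p - 1))) - 1) \<le> 2 / real p ^ 2" if "prime p" for p
  proof -
    have p: "2 \<le> real p"
      using prime_ge_2_nat[OF that] by simp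
    have "real p ^ 2 / 2 \<le> real p * (real p - 1)"
      using p by (simp add: power2_eq_square field_simps)
    moreover have "0 < real p ^ 2 / 2"
      using p by simp
    ultimately show ?thesis
      using p by (simp add: frac_le field_simps)
  qed
  then have "(\<lambda>N. \<Prod>p | prime p \<and> p \<le> N. 1 - 1 / (real p * (real p - 1))) \<longlonglongrightarrow> A_const"
    unfolding A_const_def by (rule LIMSEQ_prod_primes_prodinf)
  then have "(\<lambda>N. complex_of_real (\<Prod>p | prime p \<and> p \<le> N. 1 - 1 / (real p * (real p - 1))))
      \<longlonglongrightarrow> complex_of_real A_const"
    by (rule tendsto_of_real)
  then show ?thesis
    by (simp add: A_factor_def)
qed

lemma A_chi_factor_denominator_ge:
  assumes chi: "dirichlet_char d chi" and d: "0 < d" and p: "2 \<le> p"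
  shows "((real p)\<^sup>2 - 1) * (real p - 1) \<le> norm ((of_nat p ^ 2 - chi p) * (of_nat p - 1))"
proof -
  have n1: "(real p)\<^sup>2 - 1 \<le> norm (of_nat p ^ 2 - chi p)"
    using norm_triangle_ineq2[of "of_nat p ^ 2" "chi p"] norm_dirichlet_char_le[OF chi d, of p]
    by (simp add: norm_power)
  have "norm (of_nat p - 1 :: complex) = norm (complex_of_real (real p - 1))"
    by simp
  then have n2: "norm (of_nat p - 1 :: complex) = real p - 1"
    using p by (simp only: norm_of_real)
  show ?thesis
    unfolding norm_mult n2 using n1 p by (intro mult_right_mono) auto
qed

lemma norm_A_chi_factor_minus_1_le:
  assumes chi: "dirichlet_char d chi" and d: "0 < d" and p: "prime p"
  shows "norm (A_chi_factor chi p - 1) \<le> 8 / real p ^ 2"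
proof -
  define y where "y = real p"
  have y: "2 \<le> y"
    using prime_ge_2_nat[OF p] by (simp add: y_def)
  have num: "norm ((chi p - 1) * of_nat p) \<le> 2 * y"
    using norm_triangle_ineq4[of "chi p" 1] norm_dirichlet_char_le[OF chi d, of p]
    by (simp add: y_def norm_mult mult_right_mono)
  have "2 * 2 \<le> y * y"
    using y by (intro mult_mono) auto
  then have den_pos: "0 < (y\<^sup>2 - 1) * (y - 1)"
    using y by (simp add: power2_eq_square)
  have "norm (A_chi_factor chi p - 1) =
        norm ((chi p - 1) * of_nat p) / norm ((of_nat p ^ 2 - chi p) * (of_nat p - 1))"
    by (simp add: A_chi_factor_def norm_divide)
  also have "\<dots> \<le> 2 * y / ((y\<^sup>2 - 1) * (y - 1))"
    using num A_chi_factor_denominator_ge[OF chi d prime_ge_2_nat[OF p]] den_pos y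
    by (intro frac_le) (auto simp: y_def)
  also have "\<dots> \<le> 8 / y\<^sup>2"
  proof -
    have "y\<^sup>2 * 2 \<le> y\<^sup>2 * (3 * y - 4)"
      using y by (intro mult_left_mono) auto
    moreover have "0 \<le> (y - 1)\<^sup>2"
      by simp
    ultimately have "2 * y * y\<^sup>2 \<le> 8 * ((y\<^sup>2 - 1) * (y - 1))"
      by (simp add: algebra_simps power2_eq_square power3_eq_cube)
    then show ?thesis
      using den_pos y by (simp add: divide_simps)
  qed
  finally show ?thesis
    by (simp add: y_def)
qed

lemma A_chi_LIMSEQ:
  assumes chi: "dirichlet_char d chi" and d: "0 < d"
  shows "(\<lambda>N. \<Prod>p | prime p \<and> p \<le> N. if chi p \<noteq> 0 then A_chi_factor chi p else 1) \<longlonglongrightarrow> A_chi chi"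
proof -
  have "(\<lambda>N. \<Prod>p | prime p \<and> p \<le> N. if chi p \<noteq> 0 then A_chi_factor chi p else 1) \<longlonglongrightarrow>
        (\<Prod>p. if prime p then if chi p \<noteq> 0 then A_chi_factor chi p else 1 else 1)"
    by (rule LIMSEQ_prod_primes_prodinf[where C = 8])
      (simp add: norm_A_chi_factor_minus_1_le[OF chi d])
  moreover have "(\<lambda>p. if prime p then if chi p \<noteq> 0 then A_chi_factor chi p else 1 else 1) =
                 (\<lambda>p. if prime p \<and> chi p \<noteq> 0 then A_chi_factor chi p else 1)"
    by auto
  moreover have "A_chi chi = (\<Prod>p. if prime p \<and> chi p \<noteq> 0 then A_chi_factor chi p else 1)"
    unfolding A_chi_def A_chi_factor_def ..
  ultimately show ?thesis
    by simp
qed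

lemma complex_of_real_r_weight_factor:
  "complex_of_real (r_weight_factor p) = (of_nat p ^ 2 - 1) / (of_nat p ^ 2 - of_nat p - 1)"
  by (simp add: r_weight_factor_def)

lemma r_weight_factor_denominator_neq_0:
  assumes "2 \<le> p"
  shows "(of_nat p ^ 2 - of_nat p - 1 :: complex) \<noteq> 0"
proof -
  have "(of_nat p ^ 2 - of_nat p - 1 :: complex) = of_real ((real p)\<^sup>2 - real p - 1)"
    by simp
  then show ?thesis
    using r_weight_factor_denominator_pos[OF assms] by (metis less_irrefl of_real_eq_0_iff)
qed

lemma A_factor_times_r_weight_factor:
  assumes "2 \<le> p"
  shows "A_factor p * of_real (r_weight_factor p * (1 - 1 / real p)) = 1 - 1 / of_nat p ^ 2"
proof -
  define P :: complex where "P = of_nat p"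
  have "P \<noteq> 0" "P - 1 \<noteq> 0" "P ^ 2 - P - 1 \<noteq> 0"
    using assms r_weight_factor_denominator_neq_0[OF assms] by (auto simp: P_def)
  then have "(1 - 1 / (P * (P - 1))) * ((P ^ 2 - 1) / (P ^ 2 - P - 1) * (1 - 1 / P)) =
    1 - 1 / P ^ 2"
    by (simp add: divide_simps) (simp add: algebra_simps power2_eq_square)
  then show ?thesis
    by (simp add: A_factor_def complex_of_real_r_weight_factor P_def)
qed

lemma A_factor_times_euler_factor:
  assumes "2 \<le> p" "of_nat p ^ 2 - x \<noteq> 0"
  shows "A_factor p * (1 + of_real (r_weight_factor p) * x / (of_nat p ^ 2 - x)) =
         1 + ((x - 1) * of_nat p) / ((of_nat p ^ 2 - x) * (of_nat p - 1))"
proof -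
  define P :: complex where "P = of_nat p"
  have "P \<noteq> 0" "P - 1 \<noteq> 0" "P ^ 2 - P - 1 \<noteq> 0" "P ^ 2 - x \<noteq> 0"
    using assms r_weight_factor_denominator_neq_0[OF assms(1)] by (auto simp: P_def)
  then have "(1 - 1 / (P * (P - 1))) * (1 + (P ^ 2 - 1) / (P ^ 2 - P - 1) * x / (P ^ 2 - x)) =
             1 + ((x - 1) * P) / ((P ^ 2 - x) * (P - 1))"
    by (simp add: divide_simps) (simp add: algebra_simps power2_eq_square power3_eq_cube)
  then show ?thesis
    by (simp add: A_factor_def complex_of_real_r_weight_factor P_def)
qed

lemma one_minus_inverse_square_times_euler_factor:
  fixes x P :: "'a :: field"
  assumes "P \<noteq> 0" "P ^ 2 - x \<noteq> 0"
  shows "(1 - 1 / P ^ 2) * (1 + x / (P ^ 2 - x)) = 1 + (x - 1) / (P ^ 2 - x)"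
  using assms by (simp add: divide_simps)

lemma A_chi_factor_neq_0:
  assumes chi: "dirichlet_char d chi" and d: "0 < d" and p: "prime p"
  shows "A_chi_factor chi p \<noteq> 0"
proof
  define P :: complex where "P = of_nat p"
  have "P \<noteq> 0" "P - 1 \<noteq> 0" "P ^ 2 - chi p \<noteq> 0"
    using prime_ge_2_nat[OF p] dirichlet_char_neq_square[OF chi d prime_ge_2_nat[OF p]]
    by (auto simp: P_def)
  then have "A_chi_factor chi p = (P ^ 3 - P ^ 2 - P + chi p) / ((P ^ 2 - chi p) * (P - 1))"
    unfolding A_chi_factor_def P_def[symmetric]
    by (simp add: divide_simps) (simp add: algebra_simps power2_eq_square power3_eq_cube)
  moreover assume "A_chi_factor chi p = 0"
  ultimately have "P ^ 3 - P ^ 2 - P + chi p = 0"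
    using \<open>P ^ 2 - chi p \<noteq> 0\<close> \<open>P - 1 \<noteq> 0\<close> by simp
  then have "chi p = - (P ^ 3 - P ^ 2 - P)"
    by (simp add: eq_neg_iff_add_eq_0 algebra_simps)
  also have "P ^ 3 - P ^ 2 - P = of_real ((real p)^3 - (real p)\<^sup>2 - real p)"
    by (simp add: P_def)
  finally have "norm (chi p) = \<bar>(real p)^3 - (real p)\<^sup>2 - real p\<bar>"
    by (simp only: norm_minus_cancel norm_of_real)
  moreover have "2 \<le> (real p)^3 - (real p)\<^sup>2 - real p"
  proof -
    have p2: "2 \<le> real p"
      using prime_ge_2_nat[OF p] by simp
    have "2 * 1 \<le> real p * (real p - 1)"
      using p2 by (intro mult_mono) auto
    then have "2 * 1 \<le> real p * ((real p)\<^sup>2 - real p - 1)"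
      using p2 by (intro mult_mono) (auto simp: power2_eq_square algebra_simps)
    then show ?thesis
      by (simp add: power2_eq_square power3_eq_cube algebra_simps)
  qed
  ultimately show False
    using norm_dirichlet_char_le[OF chi d, of p] by simp
qed

lemma prime_coprime_iff_not_dvd: "prime (p::nat) \<Longrightarrow> coprime p n \<longleftrightarrow> \<not> p dvd n"
  by (metis coprime_absorb_left coprime_commute not_prime_unit prime_imp_coprime)

lemma local_factor_identity:
  assumes chi: "dirichlet_char \<delta> chi" and \<delta>: "0 < \<delta>" and p: "prime p"
  shows "A_factor p * r_twist_euler_factor w chi p *
           (if p dvd w then of_real (r_weight_factor p * (1 - 1 / real p)) else 1) =
         (if p dvd \<delta> \<and> \<not> p dvd w then A_factor p else 1) *
         (if p dvd \<delta> \<and> p dvd w then 1 - 1 / of_nat p ^ 2 else 1) *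
         (if p dvd w \<and> \<not> p dvd \<delta>
          then (1 + (chi p - 1) / (of_nat p ^ 2 - chi p)) / A_chi_factor chi p else 1) *
         (if chi p \<noteq> 0 then A_chi_factor chi p else 1)"
proof -
  have p2: "2 \<le> p"
    using prime_ge_2_nat[OF p] .
  have chi_0_iff: "chi p = 0 \<longleftrightarrow> p dvd \<delta>"
    using dirichlet_char_eq_0_iff[OF chi] prime_coprime_iff_not_dvd[OF p] by simp
  have p_chi: "of_nat p ^ 2 - chi p \<noteq> 0"
    using dirichlet_char_neq_square[OF chi \<delta> p2] by simp
  show ?thesis
  proof (cases "p dvd \<delta>")
    case True
    then have "r_twist_euler_factor w chi p = 1"
      using chi_0_iff by (simp add: r_twist_euler_factor_def)
    then show ?thesis
      using True chi_0_iff A_factor_times_r_weight_factor[OF p2] by simp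
  next
    case False
    then have "chi p \<noteq> 0"
      using chi_0_iff by simp
    show ?thesis
    proof (cases "p dvd w")
      case True
      have "A_factor p * r_twist_euler_factor w chi p *
        of_real (r_weight_factor p * (1 - 1 / real p)) =
            (1 - 1 / of_nat p ^ 2) * (1 + chi p / (of_nat p ^ 2 - chi p))"
        using True A_factor_times_r_weight_factor[OF p2]
        by (simp add: r_twist_euler_factor_def ac_simps)
      also have "\<dots> = 1 + (chi p - 1) / (of_nat p ^ 2 - chi p)"
        using p2 p_chi by (intro one_minus_inverse_square_times_euler_factor) auto
      finally show ?thesis
        using True False \<open>chi p \<noteq> 0\<close> A_chi_factor_neq_0[OF chi \<delta> p] by simp
    next
      case False
      then show ?thesis
        using \<open>\<not> p dvd \<delta>\<close> \<open>chi p \<noteq> 0\<close> A_factor_times_euler_factor[OF p2 p_chi]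
        by (simp add: r_twist_euler_factor_def A_chi_factor_def)
    qed
  qed
qed

lemma prod_primes_le_if:
  fixes N :: nat
  assumes "\<And>p. prime p \<Longrightarrow> Q p \<Longrightarrow> p \<le> N"
  shows "(\<Prod>p | prime p \<and> p \<le> N. if Q p then f p else 1) = (\<Prod>p | prime p \<and> Q p. f p)"
proof -
  have "{p \<in> {p. prime p \<and> p \<le> N}. Q p} = {p. prime p \<and> Q p}"
    using assms by blast
  moreover have "finite {p. prime p \<and> p \<le> N}"
    by (rule finite_subset[of _ "{..N}"]) auto
  ultimately show ?thesis
    using prod.inter_filter[of "{p. prime p \<and> p \<le> N}" f Q] by simp
qed

lemma partial_products_identity:
  fixes w \<delta> N :: nat
  assumes chi: "dirichlet_char \<delta> chi" and \<delta>: "0 < \<delta>" and w: "0 < w" and N: "w \<le> N" "\<delta> \<le> N"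
  shows "(\<Prod>p | prime p \<and> p \<le> N. A_factor p) * (\<Prod>p | prime p \<and> p \<le> N. r_twist_euler_factor w chi p) *
           (\<Prod>p\<in>prime_factors w. of_real (r_weight_factor p * (1 - 1 / real p))) =
         (\<Prod>p | prime p \<and> p dvd \<delta> \<and> \<not> p dvd w. A_factor p) *
         (\<Prod>p | prime p \<and> p dvd \<delta> \<and> p dvd w. 1 - 1 / of_nat p ^ 2) *
         (\<Prod>p | prime p \<and> p dvd w \<and> \<not> p dvd \<delta>.
            (1 + (chi p - 1) / (of_nat p ^ 2 - chi p)) / A_chi_factor chi p) *
         (\<Prod>p | prime p \<and> p \<le> N. if chi p \<noteq> 0 then A_chi_factor chi p else 1)"
proof -
  have le_N: "p \<le> N" if "p dvd w \<or> p dvd \<delta>" for p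
    using that dvd_imp_le w \<delta> N by (meson le_trans)
  have "prime_factors w = {p. prime p \<and> p dvd w}"
    using w by (auto simp: in_prime_factors_iff)
  then have pf: "(\<Prod>p\<in>prime_factors w. of_real (r_weight_factor p * (1 - 1 / real p))) =
             (\<Prod>p | prime p \<and> p \<le> N.
               if p dvd w then of_real (r_weight_factor p * (1 - 1 / real p)) else 1)"
    by (simp only:) (rule prod_primes_le_if[symmetric], use le_N in auto)
  have s1: "(\<Prod>p | prime p \<and> p \<le> N. if p dvd \<delta> \<and> \<not> p dvd w then A_factor p else 1) =
             (\<Prod>p | prime p \<and> p dvd \<delta> \<and> \<not> p dvd w. A_factor p)"
    by (rule prod_primes_le_if) (use le_N in blast)
  have s2: "(\<Prod>p | prime p \<and> p \<le> N. if p dvd \<delta> \<and> p dvd w then 1 - 1 / of_nat p ^ 2 else 1) =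
             (\<Prod>p | prime p \<and> p dvd \<delta> \<and> p dvd w. 1 - 1 / of_nat p ^ 2 :: complex)"
    by (rule prod_primes_le_if) (use le_N in blast)
  have s3: "(\<Prod>p | prime p \<and> p \<le> N. if p dvd w \<and> \<not> p dvd \<delta>
              then (1 + (chi p - 1) / (of_nat p ^ 2 - chi p)) / A_chi_factor chi p else 1) =
            (\<Prod>p | prime p \<and> p dvd w \<and> \<not> p dvd \<delta>.
              (1 + (chi p - 1) / (of_nat p ^ 2 - chi p)) / A_chi_factor chi p)"
    by (rule prod_primes_le_if) (use le_N in blast)
  have "(\<Prod>p | prime p \<and> p \<le> N. A_factor p) * (\<Prod>p | prime p \<and> p \<le> N. r_twist_euler_factor w chi p) *
           (\<Prod>p\<in>prime_factors w. of_real (r_weight_factor p * (1 - 1 / real p))) =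
        (\<Prod>p | prime p \<and> p \<le> N. A_factor p * r_twist_euler_factor w chi p *
           (if p dvd w then of_real (r_weight_factor p * (1 - 1 / real p)) else 1))"
    unfolding pf by (simp only: prod.distrib)
  also have "\<dots> = (\<Prod>p | prime p \<and> p \<le> N.
         (if p dvd \<delta> \<and> \<not> p dvd w then A_factor p else 1) *
         (if p dvd \<delta> \<and> p dvd w then 1 - 1 / of_nat p ^ 2 else 1) *
         (if p dvd w \<and> \<not> p dvd \<delta>
          then (1 + (chi p - 1) / (of_nat p ^ 2 - chi p)) / A_chi_factor chi p else 1) *
         (if chi p \<noteq> 0 then A_chi_factor chi p else 1))"
    using local_factor_identity[OF chi \<delta>] by (intro prod.cong) auto
  also have "\<dots> = (\<Prod>p | prime p \<and> p dvd \<delta> \<and> \<not> p dvd w. A_factor p) *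
         (\<Prod>p | prime p \<and> p dvd \<delta> \<and> p dvd w. 1 - 1 / of_nat p ^ 2) *
         (\<Prod>p | prime p \<and> p dvd w \<and> \<not> p dvd \<delta>.
            (1 + (chi p - 1) / (of_nat p ^ 2 - chi p)) / A_chi_factor chi p) *
         (\<Prod>p | prime p \<and> p \<le> N. if chi p \<noteq> 0 then A_chi_factor chi p else 1)"
    by (simp only: prod.distrib s1 s2 s3)
  finally show ?thesis .
qed

lemma prod_prime_factors_r_weight_factor:
  assumes "0 < w"
  shows "(\<Prod>p\<in>prime_factors w. r_weight_factor p * (1 - 1 / real p)) =
    r_weight w * real (totient w) / real w"
  using totient_formula2[of w] assms by (simp add: r_weight_def prod.distrib)

section \<open>The formula for \<open>\<rho>\<close>\<close>

lemma A_const_times_infsum_r_twist: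
  assumes chi: "dirichlet_char \<delta> chi" and \<delta>: "0 < \<delta>" and w: "0 < w"
  shows "of_real A_const * (\<Sum>\<^sub>\<infinity>n. r_twist w chi n) *
    of_real (r_weight w * real (totient w) / real w) =
         (\<Prod>p | prime p \<and> p dvd \<delta> \<and> \<not> p dvd w. A_factor p) *
         (\<Prod>p | prime p \<and> p dvd \<delta> \<and> p dvd w. 1 - 1 / of_nat p ^ 2) *
         (\<Prod>p | prime p \<and> p dvd w \<and> \<not> p dvd \<delta>.
            (1 + (chi p - 1) / (of_nat p ^ 2 - chi p)) / A_chi_factor chi p) *
         A_chi chi"
  (is "?L = ?C * _")
proof -
  have c: "(\<Prod>p\<in>prime_factors w. of_real (r_weight_factor p * (1 - 1 / real p))) =
           complex_of_real (r_weight w * real (totient w) / real w)"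
    using arg_cong[OF prod_prime_factors_r_weight_factor[OF w], of complex_of_real]
    by (simp only: of_real_prod)
  have lim: "(\<lambda>N. (\<Prod>p | prime p \<and> p \<le> N. A_factor p) *
    (\<Prod>p | prime p \<and> p \<le> N. r_twist_euler_factor w chi p) *
             (\<Prod>p\<in>prime_factors w. of_real (r_weight_factor p * (1 - 1 / real p)))) \<longlonglongrightarrow> ?L"
    unfolding c
    by (intro tendsto_mult A_const_LIMSEQ r_twist_euler_product[OF chi \<delta> w] tendsto_const)
  have "(\<lambda>N. ?C * (\<Prod>p | prime p \<and> p \<le> N. if chi p \<noteq> 0 then A_chi_factor chi p else 1))
      \<longlonglongrightarrow> ?C * A_chi chi"
    by (intro tendsto_mult tendsto_const A_chi_LIMSEQ[OF chi \<delta>])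
  moreover have "\<forall>\<^sub>F N in sequentially.
      ?C * (\<Prod>p | prime p \<and> p \<le> N. if chi p \<noteq> 0 then A_chi_factor chi p else 1) =
      (\<Prod>p | prime p \<and> p \<le> N. A_factor p) * (\<Prod>p | prime p \<and> p \<le> N. r_twist_euler_factor w chi p) *
      (\<Prod>p\<in>prime_factors w. of_real (r_weight_factor p * (1 - 1 / real p)))"
    using partial_products_identity[OF chi \<delta> w]
    by (intro eventually_sequentiallyI[of "max w \<delta>"]) simp
  ultimately have "(\<lambda>N. (\<Prod>p | prime p \<and> p \<le> N. A_factor p) *
      (\<Prod>p | prime p \<and> p \<le> N. r_twist_euler_factor w chi p) *
      (\<Prod>p\<in>prime_factors w. of_real (r_weight_factor p * (1 - 1 / real p)))) \<longlonglongrightarrow> ?C * A_chi chi"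
    by (rule Lim_transform_eventually)
  with lim show ?thesis
    by (rule LIMSEQ_unique)
qed

lemma has_sum_sum:
  fixes f :: "'i \<Rightarrow> 'a \<Rightarrow> 'b :: topological_comm_monoid_add"
  assumes "finite I" "\<And>i. i \<in> I \<Longrightarrow> (f i has_sum s i) A"
  shows "((\<lambda>x. \<Sum>i\<in>I. f i x) has_sum (\<Sum>i\<in>I. s i)) A"
  using assms by (induction I rule: finite_induct) (auto intro: has_sum_add)

lemma infsum_residue_class:
  fixes f :: "nat \<Rightarrow> complex"
  assumes \<delta>: "0 < \<delta>" and \<alpha>: "coprime \<alpha> \<delta>" and f: "(\<lambda>n. norm (f n)) summable_on UNIV"
  shows "infsum f {n. [n = \<alpha>] (mod \<delta>)} =
         (\<Sum>chi | dirichlet_char \<delta> chi. cnj (chi \<alpha>) * (\<Sum>\<^sub>\<infinity>n. chi n * f n)) / of_nat (totient \<delta>)"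
proof -
  let ?X = "{chi. dirichlet_char \<delta> chi}"
  let ?S = "\<Sum>chi\<in>?X. cnj (chi \<alpha>) * (\<Sum>\<^sub>\<infinity>n. chi n * f n)"
  have "(\<lambda>n. chi n * f n) summable_on UNIV" if "chi \<in> ?X" for chi
  proof (rule abs_summable_summable, rule Infinite_Sum.abs_summable_on_comparison_test'[OF f])
    show "norm (chi n * f n) \<le> norm (f n)" if "n \<in> UNIV" for n
      using norm_dirichlet_char_le[of \<delta> chi n] \<open>chi \<in> ?X\<close> \<delta>
      by (simp add: norm_mult mult_left_le_one_le)
  qed
  then have "((\<lambda>n. \<Sum>chi\<in>?X. cnj (chi \<alpha>) * (chi n * f n)) has_sum ?S) UNIV"
    by (intro has_sum_sum finite_dirichlet_chars[OF \<delta>] has_sum_cmult_right has_sum_infsum)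
  moreover have "(\<Sum>chi\<in>?X. cnj (chi \<alpha>) * (chi n * f n)) =
                 (if [n = \<alpha>] (mod \<delta>) then of_nat (totient \<delta>) * f n else 0)" for n
    using dirichlet_char_orthogonality[OF \<delta> \<alpha>, of n]
    by (simp add: mult.assoc[symmetric] sum_distrib_right[symmetric])
  ultimately have "((\<lambda>n. of_nat (totient \<delta>) * f n) has_sum ?S) {n. [n = \<alpha>] (mod \<delta>)}"
    by (subst has_sum_cong_neutral[where T = UNIV]) auto
  then have "(f has_sum ?S / of_nat (totient \<delta>)) {n. [n = \<alpha>] (mod \<delta>)}"
    using \<delta> by (subst (asm) has_sum_cmult_right_iff) auto
  then show ?thesis
    by (rule infsumI)
qed

lemma progression_eq_image_mult:
  assumes "0 < (w::nat)"
  shows "{t. 1 \<le> t \<and> [t = w * \<alpha>] (mod w * \<delta>)} = (\<lambda>n. w * n) ` {n. 1 \<le> n \<and> [n = \<alpha>] (mod \<delta>)}"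
proof -
  have cong_iff: "[w * n = w * \<alpha>] (mod w * \<delta>) \<longleftrightarrow> [n = \<alpha>] (mod \<delta>)" for n
    using assms by (simp add: cong_def mod_mult_mult1)
  have "t \<in> (\<lambda>n. w * n) ` {n. 1 \<le> n \<and> [n = \<alpha>] (mod \<delta>)}"
    if "1 \<le> t" "[t = w * \<alpha>] (mod w * \<delta>)" for t
  proof -
    have "[t = w * \<alpha>] (mod w)"
      using that(2) by (rule cong_modulus_mult_nat)
    then have "w dvd t"
      using cong_dvd_iff by fastforce
    then obtain n where "t = w * n"
      by blast
    then show ?thesis
      using that cong_iff by (auto intro!: image_eqI[of _ _ n])
  qed
  moreover have "1 \<le> w * n" if "1 \<le> n" for n
    using assms that by simp
  ultimately show ?thesis
    using cong_iff by auto
qed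

lemma infsum_complex_of_real:
  "f summable_on A \<Longrightarrow> complex_of_real (infsum f A) = (\<Sum>\<^sub>\<infinity>x\<in>A. complex_of_real (f x))"
  by (rule infsumI[symmetric], rule has_sum_of_real, rule has_sum_infsum)

lemma r_fun_mult_eq_r_twist:
  assumes "0 < w"
  shows "chi n * complex_of_real (r_fun (w * n)) =
    of_real (r_weight w) / of_nat w ^ 2 * r_twist w chi n"
proof (cases "n = 0")
  case True
  then show ?thesis
    by (simp add: r_fun_eq r_twist_def)
next
  case False
  then have "r_fun (w * n) = r_weight w * r_weight_outside w n / ((real w)\<^sup>2 * (real n)\<^sup>2)"
    using assms by (simp add: r_fun_eq r_weight_mult power_mult_distrib)
  then have "complex_of_real (r_fun (w * n)) =
      of_real (r_weight w) * of_real (r_weight_outside w n) / (of_nat w ^ 2 * of_nat n ^ 2)"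
    by simp
  moreover have "(of_nat w :: complex) \<noteq> 0" "(of_nat n :: complex) \<noteq> 0"
    using assms False by auto
  ultimately show ?thesis
    by (simp add: r_twist_def field_simps)
qed

lemma rho_eq_character_sum:
  assumes w: "0 < w" and \<delta>: "0 < \<delta>" and \<alpha>: "coprime \<alpha> \<delta>"
  shows "complex_of_real (rho (w * \<alpha>) (w * \<delta>)) =
         of_real A_const * of_real (r_weight w) / (of_nat w ^ 2 * of_nat (totient \<delta>)) *
         (\<Sum>chi | dirichlet_char \<delta> chi. cnj (chi \<alpha>) * (\<Sum>\<^sub>\<infinity>n. r_twist w chi n))"
proof -
  have inj: "inj_on (\<lambda>n. w * n) A" for A
    using w by (auto intro: inj_onI)
  have summable: "(\<lambda>n. r_fun (w * n)) summable_on A" for A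
    using r_fun_summable_on[of "(\<lambda>n. w * n) ` A"] summable_on_reindex[OF inj, of r_fun]
    by (simp add: o_def)
  have twist: "(\<Sum>\<^sub>\<infinity>n. chi n * of_real (r_fun (w * n))) =
             of_real (r_weight w) / of_nat w ^ 2 * (\<Sum>\<^sub>\<infinity>n. r_twist w chi n)" for chi
    unfolding r_fun_mult_eq_r_twist[OF w] by (rule infsum_cmult_right')
  have "infsum r_fun {t. 1 \<le> t \<and> [t = w * \<alpha>] (mod w * \<delta>)} =
        infsum (\<lambda>n. r_fun (w * n)) {n. 1 \<le> n \<and> [n = \<alpha>] (mod \<delta>)}"
    unfolding progression_eq_image_mult[OF w] by (simp add: infsum_reindex[OF inj] o_def)
  also have "\<dots> = infsum (\<lambda>n. r_fun (w * n)) {n. [n = \<alpha>] (mod \<delta>)}"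
    by (rule infsum_cong_neutral) (auto simp: r_fun_eq)
  finally have "complex_of_real (rho (w * \<alpha>) (w * \<delta>)) =
      of_real A_const * (\<Sum>\<^sub>\<infinity>n\<in>{n. [n = \<alpha>] (mod \<delta>)}. complex_of_real (r_fun (w * n)))"
    by (simp add: rho_def infsum_complex_of_real[OF summable])
  also have "(\<Sum>\<^sub>\<infinity>n\<in>{n. [n = \<alpha>] (mod \<delta>)}. complex_of_real (r_fun (w * n))) =
      (\<Sum>chi | dirichlet_char \<delta> chi. cnj (chi \<alpha>) * (\<Sum>\<^sub>\<infinity>n. chi n * of_real (r_fun (w * n)))) /
      of_nat (totient \<delta>)"
    using summable[of UNIV] r_fun_nonneg by (intro infsum_residue_class[OF \<delta> \<alpha>]) simp
  also have "of_real A_const * ((\<Sum>chi | dirichlet_char \<delta> chi.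
        cnj (chi \<alpha>) * (\<Sum>\<^sub>\<infinity>n. chi n * of_real (r_fun (w * n)))) / of_nat (totient \<delta>)) =
      of_real A_const * (of_real (r_weight w) / of_nat w ^ 2 *
        (\<Sum>chi | dirichlet_char \<delta> chi. cnj (chi \<alpha>) * (\<Sum>\<^sub>\<infinity>n. r_twist w chi n))) / of_nat (totient \<delta>)"
    unfolding twist by (simp add: sum_distrib_left mult_ac)
  finally show ?thesis
    by simp
qed

theorem rho_formula:
  assumes w: "0 < w" and \<delta>: "0 < \<delta>" and \<alpha>: "coprime \<alpha> \<delta>"
  shows "complex_of_real (rho (w * \<alpha>) (w * \<delta>)) =
      1 / (of_nat (totient \<delta>) * of_nat w * of_nat (totient w)) *
      (\<Prod>p | prime p \<and> p dvd \<delta> \<and> \<not> p dvd w. A_factor p) *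
      (\<Prod>p | prime p \<and> p dvd \<delta> \<and> p dvd w. 1 - 1 / of_nat p ^ 2) *
      (\<Sum>chi | dirichlet_char \<delta> chi. cnj (chi \<alpha>) * A_chi chi *
         (\<Prod>p | prime p \<and> p dvd w \<and> \<not> p dvd \<delta>.
            (1 + (chi p - 1) / (of_nat p ^ 2 - chi p)) / A_chi_factor chi p))"
    (is "_ = _ * ?C1 * ?C2 * (\<Sum>chi | _. _ * _ * ?C3 chi)")
proof -
  define K where "K = complex_of_real (r_weight w * real (totient w) / real w)"
  have "K \<noteq> 0"
    using w r_weight_ge_1[of w] by (simp add: K_def)
  have per_char: "of_real A_const * (\<Sum>\<^sub>\<infinity>n. r_twist w chi n) = ?C1 * ?C2 * ?C3 chi * A_chi chi / K"
    if "dirichlet_char \<delta> chi" for chi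
    using A_const_times_infsum_r_twist[OF that \<delta> w, folded K_def] \<open>K \<noteq> 0\<close>
    by (simp add: eq_divide_eq)
  have "(\<Sum>chi | dirichlet_char \<delta> chi. cnj (chi \<alpha>) * (of_real A_const * (\<Sum>\<^sub>\<infinity>n. r_twist w chi n))) =
        of_real A_const * (\<Sum>chi | dirichlet_char \<delta> chi. cnj (chi \<alpha>) * (\<Sum>\<^sub>\<infinity>n. r_twist w chi n))"
    by (simp add: sum_distrib_left mult.left_commute)
  then have "complex_of_real (rho (w * \<alpha>) (w * \<delta>)) =
      of_real (r_weight w) / (of_nat w ^ 2 * of_nat (totient \<delta>)) *
      (\<Sum>chi | dirichlet_char \<delta> chi. cnj (chi \<alpha>) * (of_real A_const * (\<Sum>\<^sub>\<infinity>n. r_twist w chi n)))"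
    using rho_eq_character_sum[OF w \<delta> \<alpha>] by simp
  also have "\<dots> = of_real (r_weight w) / (of_nat w ^ 2 * of_nat (totient \<delta>)) *
      (\<Sum>chi | dirichlet_char \<delta> chi. cnj (chi \<alpha>) * (?C1 * ?C2 * ?C3 chi * A_chi chi / K))"
    using per_char by (intro arg_cong[where f = "\<lambda>S. _ * S"] sum.cong) auto
  also have "\<dots> = of_real (r_weight w) / (of_nat w ^ 2 * of_nat (totient \<delta>)) * (?C1 * ?C2 / K) *
      (\<Sum>chi | dirichlet_char \<delta> chi. cnj (chi \<alpha>) * A_chi chi * ?C3 chi)"
    by (simp add: sum_distrib_left sum_divide_distrib mult_ac)
  also have "\<dots> = 1 / (of_nat (totient \<delta>) * of_nat w * of_nat (totient w)) * ?C1 * ?C2 *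
      (\<Sum>chi | dirichlet_char \<delta> chi. cnj (chi \<alpha>) * A_chi chi * ?C3 chi)"
    using w r_weight_ge_1[of w] by (simp add: K_def field_simps power2_eq_square)
  finally show ?thesis .
qed

corollary rho_formula_coprime:
  assumes "0 < d" "coprime a d"
  shows "complex_of_real (rho a d) =
      1 / of_nat (totient d) * (\<Prod>p | prime p \<and> p dvd d. A_factor p) *
      (\<Sum>chi | dirichlet_char d chi. cnj (chi a) * A_chi chi)"
proof -
  have sets: "{p. prime p \<and> p dvd d \<and> \<not> p dvd 1} = {p. prime p \<and> p dvd d}"
    "{p. prime p \<and> p dvd d \<and> p dvd 1} = {}" "{p. prime p \<and> p dvd 1 \<and> \<not> p dvd d} = {}"
    by auto
  show ?thesis
    using rho_formula[of 1 d a, unfolded sets] assms by simp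
qed

theorem mainTheorem11:
  fixes a d :: nat
  assumes "a \<ge> 1" and "d \<ge> 1"
  defines "w \<equiv> gcd a d"
  defines "\<alpha> \<equiv> a div w"
  defines "\<delta> \<equiv> d div w"
  shows "complex_of_real (rho a d) =
      1 / (of_nat (totient \<delta>) * of_nat w * of_nat (totient w)) *
      (\<Prod>p\<in>{p. prime p \<and> p dvd \<delta> \<and> \<not> p dvd w}. 1 - 1 / (of_nat p * (of_nat p - 1))) *
      (\<Prod>p\<in>{p. prime p \<and> p dvd \<delta> \<and> p dvd w}. 1 - 1 / (of_nat p)^2) *
      (\<Sum>chi\<in>{chi. dirichlet_char \<delta> chi}. cnj (chi \<alpha>) * A_chi chi *
         (\<Prod>p\<in>{p. prime p \<and> p dvd w \<and> \<not> p dvd \<delta>}.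
            (1 + (chi p - 1) / (of_nat p ^ 2 - chi p)) /
            (1 + ((chi p - 1) * of_nat p) / ((of_nat p ^ 2 - chi p) * (of_nat p - 1)))))
    \<and> (coprime a d \<longrightarrow>
      complex_of_real (rho a d) =
      1 / of_nat (totient d) *
      (\<Prod>p\<in>{p. prime p \<and> p dvd d}. 1 - 1 / (of_nat p * (of_nat p - 1))) *
      (\<Sum>chi\<in>{chi. dirichlet_char d chi}. cnj (chi a) * A_chi chi))"
proof -
  have "0 < w" "w dvd a" "w dvd d"
    using assms(1) by (simp_all add: w_def)
  then have a: "a = w * \<alpha>" and d: "d = w * \<delta>"
    by (simp_all add: \<alpha>_def \<delta>_def)
  have "0 < \<delta>"
    using assms(2) d by (cases "\<delta> = 0") auto
  have "coprime \<alpha> \<delta>"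
    unfolding \<alpha>_def \<delta>_def w_def by (rule div_gcd_coprime) (use assms(1) in simp)
  note general = rho_formula[OF \<open>0 < w\<close> \<open>0 < \<delta>\<close> \<open>coprime \<alpha> \<delta>\<close>,
    folded a d, unfolded A_factor_def A_chi_factor_def]
  have "0 < d"
    using assms(2) by simp
  then show ?thesis
    using general rho_formula_coprime[of d a, unfolded A_factor_def] by blast
qed

end
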